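(* In the setting described in the context, let $S^v_m=R^v_{m+1}-R^v_m=\sum_{w\in V_m}L^v_w(C^{vw})$ and $b_m=\big(E\|S^\emptyset_m\|_\infty^2\big)^{1/2}$. Then $b_m^2\le\frac23\,b_{m-1}^2$ for all $m\in\mathbb N$; consequently $b_m\le(2/3)^{m/2}\,b_0$ with $b_0=(E\|C^\emptyset\|_\infty^2)^{1/2}<\infty$, and $\sum_{m\ge0}\|S^\emptyset_m\|_\infty<\infty$ almost surely.
   Context: Notation. $V=\bigcup_{k\ge0}\{1,2\}^k$ is the rooted binary tree of finite words over $\{1,2\}$; $\emptyset$ is the empty word (root), $vw$ is concatenation, $|v|$ is the length, $V_m$ (resp. $V_{<m}$) is the set of words of length $m$ (resp. $<m$). $D=D[0,1]$ is the space of càdlàg functions $[0,1]\to\mathbb R$, $\|f\|_\infty=\sup_t|f(t)|$. $(U^v)_{v\in V}$ are i.i.d. random variables uniformly distributed on $[0,1]$. Cost functions: $C(x)=1+2x\ln x+2(1-x)\ln(1-x)$ for $x\in[0,1]$ (with $0\ln0=0$), and for $t,x\in[0,1]$, $C(t,x)=C(x)+2\,\mathbf 1_{t<x}\big(-1+x+(1-t)\ln(1-t)-(1-x)\ln(1-x)-(x-t)\ln(x-t)\big)$. Quicksort limit variables: for $v,w\in V$ put $\ell^v_\emptyset=1$, $\ell^v_{w1}=\ell^v_wU^{vw}$, $\ell^v_{w2}=\ell^v_w(1-U^{vw})$ and $Q^v=\lim_{m\to\infty}\sum_{w\in V_{<m}}\ell^v_wC(U^{vw})$; this limit exists a.s.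 and in $L_2$, $Q^v$ has the mean-zero Quicksort limit distribution (which has finite moments of all orders), and $Q^v=U^vQ^{v1}+(1-U^v)Q^{v2}+C(U^v)$ a.s. Weighted branching structure: for $v\in V$ define random linear maps $T^v_1,T^v_2$ on functions $h:[0,1]\to\mathbb R$ by $(T^v_1h)(t)=\mathbf 1_{t<U^v}\,U^v\,h(1\wedge t/U^v)$ and $(T^v_2h)(t)=\mathbf 1_{t\ge U^v}(1-U^v)\,h\big(0\vee\frac{t-U^v}{1-U^v}\big)$; the random function $C^v(t)=C(t,U^v)+\mathbf 1_{t\ge U^v}U^vQ^{v1}$; path operators $L^v_\emptyset=\mathrm{id}$, $L^v_{wi}=L^v_w\circ T^{vw}_i$ ($i=1,2$); and $R^v_m=\sum_{w\in V_{<m}}L^v_w(C^{vw})$ for $m\in\mathbb N_0$ (so $R^v_0=0$). *)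

theory Defs
  imports "HOL-Probability.Probability"
begin

text \<open>Words over the alphabet {1,2} are lists of naturals with entries in {1,2};
  the empty list is the root, concatenation is append.  A realisation of the
  family (U^v) is a function u :: nat list => real.\<close>

definition Vset :: "nat list set" where
  "Vset = {w. set w \<subseteq> {1,2}}"

definition Vlen :: "nat \<Rightarrow> nat list set" where
  "Vlen m = {w. set w \<subseteq> {1,2} \<and> length w = m}"

definition Vlt :: "nat \<Rightarrow> nat list set" where
  "Vlt m = {w. set w \<subseteq> {1,2} \<and> length w < m}"

definition xlnx :: "real \<Rightarrow> real" where
  "xlnx x = (if x = 0 then 0 else x * ln x)"

definition costC :: "real \<Rightarrow> real" where
  "costC x = 1 + 2 * xlnx x + 2 * xlnx (1 - x)"

definition costC2 :: "real \<Rightarrow> real \<Rightarrow> real" where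
  "costC2 t x = costC x + 2 * (if t < x then
      (-1 + x + xlnx (1 - t) - xlnx (1 - x) - xlnx (x - t)) else 0)"

text \<open>ell u v w = \<ell>^v_w, defined by recursion on the last letter of w
  (we recurse on the reversed word).\<close>
fun ellrev :: "(nat list \<Rightarrow> real) \<Rightarrow> nat list \<Rightarrow> nat list \<Rightarrow> real" where
  "ellrev u v [] = 1"
| "ellrev u v (i # rw) = ellrev u v rw *
      (if i = 1 then u (v @ rev rw) else 1 - u (v @ rev rw))"

definition ell :: "(nat list \<Rightarrow> real) \<Rightarrow> nat list \<Rightarrow> nat list \<Rightarrow> real" where
  "ell u v w = ellrev u v (rev w)"

text \<open>Q^v as the limit of the partial sums (the limit exists a.s.)\<close>
definition Qlim :: "(nat list \<Rightarrow> real) \<Rightarrow> nat list \<Rightarrow> real" where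
  "Qlim u v = lim (\<lambda>m. \<Sum>w\<in>Vlt m. ell u v w * costC (u (v @ w)))"

definition Top :: "(nat list \<Rightarrow> real) \<Rightarrow> nat list \<Rightarrow> nat \<Rightarrow> (real \<Rightarrow> real) \<Rightarrow> real \<Rightarrow> real" where
  "Top u v i h t = (if i = 1
      then (if t < u v then u v * h (min 1 (t / u v)) else 0)
      else (if t \<ge> u v then (1 - u v) * h (max 0 ((t - u v) / (1 - u v))) else 0))"

definition Cfun :: "(nat list \<Rightarrow> real) \<Rightarrow> nat list \<Rightarrow> real \<Rightarrow> real" where
  "Cfun u v t = costC2 t (u v) + (if t \<ge> u v then u v * Qlim u (v @ [1]) else 0)"

text \<open>Path operators: L^v_{[]} = id, L^v_{w i} = L^v_w o T^{vw}_i
  (recursion on the reversed word).\<close>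
fun Lrev :: "(nat list \<Rightarrow> real) \<Rightarrow> nat list \<Rightarrow> nat list \<Rightarrow> (real \<Rightarrow> real) \<Rightarrow> real \<Rightarrow> real" where
  "Lrev u v [] h = h"
| "Lrev u v (i # rw) h = Lrev u v rw (Top u (v @ rev rw) i h)"

definition Lop :: "(nat list \<Rightarrow> real) \<Rightarrow> nat list \<Rightarrow> nat list \<Rightarrow> (real \<Rightarrow> real) \<Rightarrow> real \<Rightarrow> real" where
  "Lop u v w = Lrev u v (rev w)"

text \<open>R^v_m and S^v_m = R^v_{m+1} - R^v_m = sum over words of length m\<close>
definition Rsum :: "(nat list \<Rightarrow> real) \<Rightarrow> nat list \<Rightarrow> nat \<Rightarrow> real \<Rightarrow> real" where
  "Rsum u v m t = (\<Sum>w\<in>Vlt m. Lop u v w (Cfun u (v @ w)) t)"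

definition Ssum :: "(nat list \<Rightarrow> real) \<Rightarrow> nat list \<Rightarrow> nat \<Rightarrow> real \<Rightarrow> real" where
  "Ssum u v m t = (\<Sum>w\<in>Vlen m. Lop u v w (Cfun u (v @ w)) t)"

definition supnorm :: "(real \<Rightarrow> real) \<Rightarrow> ennreal" where
  "supnorm f = (SUP t\<in>{0..1}. ennreal \<bar>f t\<bar>)"

end

theory Submission
  imports Defs "HOL-Real_Asymp.Real_Asymp"
begin

text \<open>
  The level sums satisfy \<open>S\<^sub>m\<^sub>+\<^sub>1 = T\<^sub>1 S\<^sup>1\<^sub>m + T\<^sub>2 S\<^sup>2\<^sub>m\<close>, where \<open>S\<^sup>i\<^sub>m\<close> is the level-\<open>m\<close> sum of the
  subtree rooted at \<open>i\<close>. As \<open>T\<^sub>1\<close> and \<open>T\<^sub>2\<close> live on the disjoint intervals \<open>[0, U)\<close> and \<open>[U, 1]\<close>,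
  \<open>\<parallel>S\<^sub>m\<^sub>+\<^sub>1\<parallel>\<^sup>2 \<le> U\<^sup>2 \<parallel>S\<^sup>1\<^sub>m\<parallel>\<^sup>2 + (1 - U)\<^sup>2 \<parallel>S\<^sup>2\<^sub>m\<parallel>\<^sup>2\<close>. The root label \<open>U\<close> is independent of the
  subtrees, whose labels are again i.i.d. uniform, and \<open>E U\<^sup>2 = E (1 - U)\<^sup>2 = 1/3\<close>; taking
  expectations gives \<open>b\<^sub>m\<^sub>+\<^sub>1\<^sup>2 \<le> 2/3 b\<^sub>m\<^sup>2\<close>.

  Finiteness of \<open>b\<^sub>0\<close> follows from \<open>\<parallel>C\<parallel> \<le> 7 + \<bar>Q\<^sup>1\<bar>\<close> and \<open>E (Q\<^sup>v)\<^sup>2 \<le> 27\<close>: the summands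
  \<open>\<ell>\<^sub>w C(U\<^sup>v\<^sup>w)\<close> of \<open>Q\<^sup>v\<close> are orthogonal in \<open>L\<^sub>2\<close>, because \<open>C(U)\<close> has mean zero and is
  independent of the labels above it, and \<open>E (\<ell>\<^sub>w C(U\<^sup>v\<^sup>w))\<^sup>2 \<le> 9 \<cdot> 3\<^sup>-\<^sup>|\<^sup>w\<^sup>|\<close>. Finally
  \<open>E \<parallel>S\<^sub>m\<parallel> \<le> b\<^sub>m\<close> is summable, so \<open>\<Sum> \<parallel>S\<^sub>m\<parallel> < \<infinity>\<close> almost surely.
\<close>

section \<open>Words of the binary tree\<close>

lemma Vset_Nil [simp]: "[] \<in> Vset"
  by (simp add: Vset_def)

lemma Vset_append [simp]: "v @ w \<in> Vset \<longleftrightarrow> v \<in> Vset \<and> w \<in> Vset"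
  by (auto simp: Vset_def)

lemma Vset_Cons [simp]: "i # w \<in> Vset \<longleftrightarrow> (i = 1 \<or> i = 2) \<and> w \<in> Vset"
  by (auto simp: Vset_def)

lemma countable_Vset: "countable Vset"
  by (rule countableI_type)

lemma Vlen_subset_Vset: "Vlen k \<subseteq> Vset"
  by (auto simp: Vlen_def Vset_def)

lemma Vlt_subset_Vset: "Vlt k \<subseteq> Vset"
  by (auto simp: Vlt_def Vset_def)

lemma Vlen_0: "Vlen 0 = {[]}"
  by (auto simp: Vlen_def)

lemma Vlen_Suc: "Vlen (Suc k) = (#) 1 ` Vlen k \<union> (#) 2 ` Vlen k"
proof -
  have "w \<in> (#) 1 ` Vlen k \<union> (#) 2 ` Vlen k" if "w \<in> Vlen (Suc k)" for w
    using that by (cases w) (auto simp: Vlen_def)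
  then show ?thesis by (auto simp: Vlen_def)
qed

lemma finite_Vlen: "finite (Vlen k)"
  by (induction k) (simp_all add: Vlen_0 Vlen_Suc)

lemma card_Vlen: "card (Vlen k) = 2 ^ k"
proof (induction k)
  case (Suc k)
  have "card (Vlen (Suc k)) = card ((#) 1 ` Vlen k) + card ((#) 2 ` Vlen k)"
    unfolding Vlen_Suc by (rule card_Un_disjoint) (auto simp: finite_Vlen)
  also have "\<dots> = 2 ^ Suc k"
    by (simp add: card_image Suc)
  finally show ?case .
qed (simp add: Vlen_0)

lemma Vlt_Suc: "Vlt (Suc m) = Vlt m \<union> Vlen m"
  by (auto simp: Vlt_def Vlen_def)

lemma Vlt_0: "Vlt 0 = {}"
  by (simp add: Vlt_def)

lemma finite_Vlt: "finite (Vlt m)"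
  by (induction m) (simp_all add: Vlt_0 Vlt_Suc finite_Vlen)

lemma sum_Vlt_eq_sum_Vlen: "(\<Sum>w\<in>Vlt m. f w) = (\<Sum>k<m. \<Sum>w\<in>Vlen k. f w)"
proof (induction m)
  case (Suc m)
  have "Vlt m \<inter> Vlen m = {}"
    by (auto simp: Vlt_def Vlen_def)
  with Suc show ?case
    by (simp add: Vlt_Suc sum.union_disjoint finite_Vlt finite_Vlen)
qed (simp add: Vlt_0)

lemma sum_Vlen_third_power: "(\<Sum>w\<in>Vlen k. (1/3::real) ^ length w) = (2/3) ^ k"
proof -
  have "(\<Sum>w\<in>Vlen k. (1/3::real) ^ length w) = (\<Sum>w\<in>Vlen k. (1/3) ^ k)"
    by (rule sum.cong) (auto simp: Vlen_def)
  then have "(\<Sum>w\<in>Vlen k. (1/3::real) ^ length w) = 2 ^ k * (1/3) ^ k"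
    by (simp add: card_Vlen)
  then show ?thesis
    by (simp add: power_mult_distrib[symmetric])
qed

lemma sum_Vlt_third_power_le: "(\<Sum>w\<in>Vlt m. (1/3::real) ^ length w) \<le> 3"
proof -
  have "(\<Sum>w\<in>Vlt m. (1/3::real) ^ length w) = (\<Sum>k<m. (2/3) ^ k)"
    by (simp add: sum_Vlt_eq_sum_Vlen sum_Vlen_third_power)
  also have "\<dots> \<le> (\<Sum>k. (2/3::real) ^ k)"
    by (rule sum_le_suminf) auto
  also have "\<dots> = 3"
    by (simp add: suminf_geometric)
  finally show ?thesis .
qed

section \<open>Path weights and path operators\<close>

lemma ell_Nil [simp]: "ell u v [] = 1"
  by (simp add: ell_def)

lemma ell_snoc: "ell u v (w @ [i]) = ell u v w * (if i = 1 then u (v @ w) else 1 - u (v @ w))"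
  by (simp add: ell_def)

lemma Lop_Nil [simp]: "Lop u v [] h = h"
  by (simp add: Lop_def)

lemma Lop_snoc: "Lop u v (w @ [i]) h = Lop u v w (Top u (v @ w) i h)"
  by (simp add: Lop_def)

lemma Lop_Cons: "Lop u v (i # w) h = Top u v i (Lop u (v @ [i]) w h)"
proof (induction w arbitrary: h rule: rev_induct)
  case (snoc j w)
  have "Lop u v (i # w @ [j]) h = Top u v i (Lop u (v @ [i]) w (Top u (v @ i # w) j h))"
    using Lop_snoc[of u v "i # w" j h] snoc by simp
  then show ?case
    by (simp add: Lop_snoc)
qed (simp add: Lop_snoc[of u v "[]", simplified])

lemma Top_sum: "Top u v i (\<lambda>s. \<Sum>x\<in>S. f x s) t = (\<Sum>x\<in>S. Top u v i (f x) t)"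
  by (simp add: Top_def sum_distrib_left)

lemma Ssum_0: "Ssum u v 0 = Cfun u v"
  by (auto simp: Ssum_def Vlen_0)

lemma Ssum_Suc:
  "Ssum u v (Suc k) t = Top u v 1 (Ssum u (v @ [1]) k) t + Top u v 2 (Ssum u (v @ [2]) k) t"
proof -
  have "Ssum u v (Suc k) t = (\<Sum>w\<in>(#) 1 ` Vlen k. Lop u v w (Cfun u (v @ w)) t)
      + (\<Sum>w\<in>(#) 2 ` Vlen k. Lop u v w (Cfun u (v @ w)) t)"
    unfolding Ssum_def Vlen_Suc by (rule sum.union_disjoint) (auto simp: finite_Vlen)
  also have "\<dots> = (\<Sum>w\<in>Vlen k. Lop u v (1 # w) (Cfun u (v @ 1 # w)) t)
      + (\<Sum>w\<in>Vlen k. Lop u v (2 # w) (Cfun u (v @ 2 # w)) t)"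
    by (simp add: sum.reindex)
  also have "\<dots> = Top u v 1 (Ssum u (v @ [1]) k) t + Top u v 2 (Ssum u (v @ [2]) k) t"
    unfolding Ssum_def Lop_Cons by (simp add: Top_sum)
  finally show ?thesis .
qed

lemma ell_shift: "ell u (v @ v') w = ell (\<lambda>z. u (v @ z)) v' w"
  by (induction w rule: rev_induct) (simp_all add: ell_snoc)

lemma Top_shift: "Top u (v @ v') i = Top (\<lambda>z. u (v @ z)) v' i"
  by (simp add: Top_def fun_eq_iff)

lemma Lop_shift: "Lop u (v @ v') w h = Lop (\<lambda>z. u (v @ z)) v' w h"
  by (induction w arbitrary: h rule: rev_induct) (simp_all add: Lop_snoc Top_shift)

lemma Qlim_shift: "Qlim u (v @ v') = Qlim (\<lambda>z. u (v @ z)) v'"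
  by (simp add: Qlim_def ell_shift)

lemma Cfun_shift: "Cfun u (v @ v') = Cfun (\<lambda>z. u (v @ z)) v'"
  unfolding Cfun_def by (simp only: append_assoc Qlim_shift[of u v "v' @ [1]"])

lemma Ssum_shift: "Ssum u (v @ v') m = Ssum (\<lambda>z. u (v @ z)) v' m"
  unfolding Ssum_def by (simp add: Lop_shift Cfun_shift)

text \<open>The ancestors of \<open>v @ w\<close> from \<open>v\<close> on, excluding \<open>v @ w\<close> itself: exactly the nodes whose
  labels \<open>ell u v w\<close> depends on.\<close>

definition path_above :: "nat list \<Rightarrow> nat list \<Rightarrow> nat list set" where
  "path_above v w = (\<lambda>k. v @ take k w) ` {..<length w}"

lemma path_above_snoc: "path_above v (w @ [i]) = insert (v @ w) (path_above v w)"
proof -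
  have "{..<length (w @ [i])} = insert (length w) {..<length w}"
    by auto
  then have "path_above v (w @ [i]) = insert (v @ w) ((\<lambda>k. v @ take k (w @ [i])) ` {..<length w})"
    by (simp add: path_above_def)
  also have "(\<lambda>k. v @ take k (w @ [i])) ` {..<length w} = path_above v w"
    unfolding path_above_def by (rule image_cong) auto
  finally show ?thesis .
qed

lemma path_above_subset_Vset: "v \<in> Vset \<Longrightarrow> w \<in> Vset \<Longrightarrow> path_above v w \<subseteq> Vset"
  using set_take_subset by (fastforce simp: path_above_def Vset_def)

lemma not_in_path_above: "length w \<le> length w' \<Longrightarrow> v @ w' \<notin> path_above v w"
  by (auto simp: path_above_def)

lemma ell_cong_path_above:
  "(\<And>z. z \<in> path_above v w \<Longrightarrow> u z = u' z) \<Longrightarrow> ell u v w = ell u' v w"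
proof (induction w rule: rev_induct)
  case (snoc i w)
  then have "ell u v w = ell u' v w" "u (v @ w) = u' (v @ w)"
    by (simp_all add: path_above_snoc)
  then show ?case
    by (simp add: ell_snoc)
qed simp

lemma ell_cong_Vset:
  "(\<And>z. z \<in> Vset \<Longrightarrow> u z = u' z) \<Longrightarrow> v \<in> Vset \<Longrightarrow> w \<in> Vset \<Longrightarrow> ell u v w = ell u' v w"
  by (rule ell_cong_path_above) (meson path_above_subset_Vset subsetD)

lemma Qlim_cong_Vset:
  "(\<And>z. z \<in> Vset \<Longrightarrow> u z = u' z) \<Longrightarrow> v \<in> Vset \<Longrightarrow> Qlim u v = Qlim u' v"
proof -
  assume eq: "\<And>z. z \<in> Vset \<Longrightarrow> u z = u' z" and v: "v \<in> Vset"
  have "ell u v w * costC (u (v @ w)) = ell u' v w * costC (u' (v @ w))" if "w \<in> Vlt m" for w m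
  proof -
    have w: "w \<in> Vset"
      using that Vlt_subset_Vset by blast
    have "ell u v w = ell u' v w"
      using ell_cong_Vset[of u u', OF eq] v w by simp
    with eq[of "v @ w"] v w show ?thesis
      by simp
  qed
  then show ?thesis
    unfolding Qlim_def by (intro arg_cong[where f = lim] ext sum.cong) simp_all
qed

lemma Top_cong: "u v = u' v \<Longrightarrow> Top u v i = Top u' v i"
  by (simp add: Top_def fun_eq_iff)

lemma Lop_cong_Vset:
  "(\<And>z. z \<in> Vset \<Longrightarrow> u z = u' z) \<Longrightarrow> v \<in> Vset \<Longrightarrow> w \<in> Vset \<Longrightarrow> Lop u v w h = Lop u' v w h"
proof (induction w arbitrary: h rule: rev_induct)
  case (snoc i w)
  then have "Top u (v @ w) i = Top u' (v @ w) i"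
    by (intro Top_cong) simp
  with snoc show ?case
    by (simp add: Lop_snoc)
qed simp

lemma Cfun_cong_Vset:
  "(\<And>z. z \<in> Vset \<Longrightarrow> u z = u' z) \<Longrightarrow> v \<in> Vset \<Longrightarrow> Cfun u v = Cfun u' v"
proof -
  assume eq: "\<And>z. z \<in> Vset \<Longrightarrow> u z = u' z" and v: "v \<in> Vset"
  have "u v = u' v"
    using eq v .
  moreover have "Qlim u (v @ [1]) = Qlim u' (v @ [1])"
    using Qlim_cong_Vset[of u u', OF eq] v by simp
  ultimately show ?thesis
    by (simp add: Cfun_def fun_eq_iff)
qed

lemma Ssum_cong_Vset:
  "(\<And>z. z \<in> Vset \<Longrightarrow> u z = u' z) \<Longrightarrow> v \<in> Vset \<Longrightarrow> Ssum u v m = Ssum u' v m"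
proof -
  assume eq: "\<And>z. z \<in> Vset \<Longrightarrow> u z = u' z" and v: "v \<in> Vset"
  have "Lop u v w (Cfun u (v @ w)) = Lop u' v w (Cfun u' (v @ w))" if "w \<in> Vlen m" for w
  proof -
    have w: "w \<in> Vset"
      using that Vlen_subset_Vset by blast
    have "Cfun u (v @ w) = Cfun u' (v @ w)"
      using Cfun_cong_Vset[of u u', OF eq] v w by simp
    moreover have "Lop u v w h = Lop u' v w h" for h
      using Lop_cong_Vset[of u u', OF eq] v w by simp
    ultimately show ?thesis
      by simp
  qed
  then show ?thesis
    unfolding Ssum_def by (intro ext sum.cong) simp_all
qed

lemma ell_restrict: "path_above v w \<subseteq> B \<Longrightarrow> ell (restrict f B) v w = ell f v w"
  by (rule ell_cong_path_above) auto

lemma ell_in_unit: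
  assumes "\<And>z. z \<in> Vset \<Longrightarrow> u z \<in> {0..1}" "v \<in> Vset" "w \<in> Vset"
  shows "0 \<le> ell u v w \<and> ell u v w \<le> 1"
  using assms(3)
proof (induction w rule: rev_induct)
  case (snoc i w)
  then have "w \<in> Vset"
    by simp
  moreover have "u (v @ w) \<in> {0..1}"
    using assms(1,2) \<open>w \<in> Vset\<close> by simp
  ultimately show ?case
    using snoc.IH by (auto simp: ell_snoc intro: mult_le_one)
qed simp

section \<open>Bounds on the cost functions and the sup norm\<close>

lemma xlnx_nonpos: "0 \<le> x \<Longrightarrow> x \<le> 1 \<Longrightarrow> xlnx x \<le> 0"
  by (auto simp: xlnx_def mult_nonneg_nonpos ln_le_zero_iff)

lemma xlnx_ge_minus_one: "0 \<le> x \<Longrightarrow> -1 \<le> xlnx x"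
proof (cases "x = 0")
  case False
  assume "0 \<le> x"
  with False have "x > 0"
    by simp
  have "ln (1 / x) \<le> 1 / x - 1"
    using \<open>x > 0\<close> by (intro ln_le_minus_one) auto
  then have "x * (1 - 1 / x) \<le> x * ln x"
    using \<open>x > 0\<close> by (intro mult_left_mono) (auto simp: ln_div)
  moreover have "x * (1 - 1 / x) = x - 1"
    using \<open>x > 0\<close> by (simp add: field_simps)
  ultimately show ?thesis
    using \<open>x > 0\<close> by (simp add: xlnx_def)
qed (simp add: xlnx_def)

lemma costC_abs_le: "0 \<le> x \<Longrightarrow> x \<le> 1 \<Longrightarrow> \<bar>costC x\<bar> \<le> 3"
  using xlnx_nonpos[of x] xlnx_ge_minus_one[of x] xlnx_nonpos[of "1 - x"] xlnx_ge_minus_one[of "1 - x"]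
  by (simp add: costC_def abs_le_iff)

lemma costC2_abs_le: "0 \<le> x \<Longrightarrow> x \<le> 1 \<Longrightarrow> 0 \<le> t \<Longrightarrow> t \<le> 1 \<Longrightarrow> \<bar>costC2 t x\<bar> \<le> 7"
  using costC_abs_le[of x] xlnx_nonpos[of "1 - x"] xlnx_ge_minus_one[of "1 - x"]
    xlnx_nonpos[of "1 - t"] xlnx_ge_minus_one[of "1 - t"] xlnx_nonpos[of "x - t"] xlnx_ge_minus_one[of "x - t"]
  by (auto simp: costC2_def abs_le_iff)

lemma supnorm_ge: "t \<in> {0..1} \<Longrightarrow> ennreal \<bar>h t\<bar> \<le> supnorm h"
  unfolding supnorm_def by (rule SUP_upper)

lemma power2_max_le_add_ennreal: "(max (a::ennreal) b) ^ 2 \<le> a ^ 2 + b ^ 2"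
  by (cases "a \<le> b") (auto simp: max_def intro: add_increasing add_increasing2)

text \<open>\<open>T\<^sub>1\<close> and \<open>T\<^sub>2\<close> have disjoint supports \<open>[0, U)\<close> and \<open>[U, 1]\<close>, so the squared norm of
  their sum is at most the sum of the squared norms, not twice it.\<close>

lemma supnorm_Top_add_sq_le:
  assumes a: "0 \<le> u v" "u v \<le> 1"
  shows "supnorm (\<lambda>t. Top u v 1 h1 t + Top u v 2 h2 t) ^ 2
     \<le> ennreal ((u v)\<^sup>2) * supnorm h1 ^ 2 + ennreal ((1 - u v)\<^sup>2) * supnorm h2 ^ 2"
proof -
  define a where "a = u v"
  have pointwise: "ennreal \<bar>Top u v 1 h1 t + Top u v 2 h2 t\<bar>
      \<le> max (ennreal a * supnorm h1) (ennreal (1 - a) * supnorm h2)"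
    if t: "t \<in> {0..1}" for t
  proof (cases "t < a")
    case True
    then have "min 1 (t / a) \<in> {0..1}"
      using t by auto
    moreover have "Top u v 1 h1 t + Top u v 2 h2 t = a * h1 (min 1 (t / a))"
      using True by (simp add: Top_def a_def)
    ultimately have "ennreal \<bar>Top u v 1 h1 t + Top u v 2 h2 t\<bar> \<le> ennreal a * supnorm h1"
      using True t by (auto simp: abs_mult ennreal_mult intro!: mult_left_mono supnorm_ge)
    then show ?thesis
      by (rule order_trans[OF _ max.cobounded1])
  next
    case False
    have "(t - a) / (1 - a) \<le> 1"
      using t a by (cases "a = 1") (auto simp: a_def divide_le_eq_1)
    then have "max 0 ((t - a) / (1 - a)) \<in> {0..1}"
      by auto
    moreover have "Top u v 1 h1 t + Top u v 2 h2 t = (1 - a) * h2 (max 0 ((t - a) / (1 - a)))"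
      using False by (simp add: Top_def a_def)
    ultimately have "ennreal \<bar>Top u v 1 h1 t + Top u v 2 h2 t\<bar> \<le> ennreal (1 - a) * supnorm h2"
      using a by (auto simp: abs_mult ennreal_mult a_def intro!: mult_left_mono supnorm_ge)
    then show ?thesis
      by (rule order_trans[OF _ max.cobounded2])
  qed
  have "supnorm (\<lambda>t. Top u v 1 h1 t + Top u v 2 h2 t)
      \<le> max (ennreal a * supnorm h1) (ennreal (1 - a) * supnorm h2)"
    unfolding supnorm_def[of "\<lambda>t. Top u v 1 h1 t + Top u v 2 h2 t"] by (rule SUP_least) (rule pointwise)
  then have "supnorm (\<lambda>t. Top u v 1 h1 t + Top u v 2 h2 t) ^ 2
      \<le> (max (ennreal a * supnorm h1) (ennreal (1 - a) * supnorm h2)) ^ 2"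
    by (rule power_mono) simp
  also have "\<dots> \<le> (ennreal a * supnorm h1) ^ 2 + (ennreal (1 - a) * supnorm h2) ^ 2"
    by (rule power2_max_le_add_ennreal)
  also have "\<dots> = ennreal (a\<^sup>2) * supnorm h1 ^ 2 + ennreal ((1 - a)\<^sup>2) * supnorm h2 ^ 2"
    using a by (simp add: power_mult_distrib ennreal_power a_def)
  finally show ?thesis
    by (simp add: a_def)
qed

lemma supnorm_Ssum_Suc_sq_le:
  assumes "0 \<le> u v" "u v \<le> 1"
  shows "supnorm (Ssum u v (Suc k)) ^ 2
     \<le> ennreal ((u v)\<^sup>2) * supnorm (Ssum u (v @ [1]) k) ^ 2 + ennreal ((1 - u v)\<^sup>2) * supnorm (Ssum u (v @ [2]) k) ^ 2"
proof -
  have "Ssum u v (Suc k) = (\<lambda>t. Top u v 1 (Ssum u (v @ [1]) k) t + Top u v 2 (Ssum u (v @ [2]) k) t)"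
    by (rule ext) (rule Ssum_Suc)
  then show ?thesis
    using supnorm_Top_add_sq_le[of u v, OF assms] by simp
qed

lemma supnorm_Cfun_le:
  assumes u: "0 \<le> u v" "u v \<le> 1"
  shows "supnorm (Cfun u v) \<le> ennreal (7 + \<bar>Qlim u (v @ [1])\<bar>)"
  unfolding supnorm_def
proof (rule SUP_least)
  fix t :: real
  assume t: "t \<in> {0..1}"
  have "\<bar>Cfun u v t\<bar> \<le> \<bar>costC2 t (u v)\<bar> + \<bar>u v\<bar> * \<bar>Qlim u (v @ [1])\<bar>"
    by (auto simp: Cfun_def abs_mult intro: order_trans[OF abs_triangle_ineq])
  also have "\<dots> \<le> 7 + 1 * \<bar>Qlim u (v @ [1])\<bar>"
    using u t by (intro add_mono mult_right_mono costC2_abs_le) auto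
  finally show "ennreal \<bar>Cfun u v t\<bar> \<le> ennreal (7 + \<bar>Qlim u (v @ [1])\<bar>)"
    by (intro ennreal_leI) simp
qed

section \<open>Continuity and the sup norm at rational points\<close>

lemma continuous_on_xlnx: "continuous_on {0..} xlnx"
proof -
  have "continuous (at x within {0..}) (\<lambda>x::real. x * ln x)" if "x \<in> {0..}" for x
  proof (cases "x = 0")
    case True
    have "((\<lambda>x::real. x * ln x) \<longlongrightarrow> 0) (at_right 0)"
      by real_asymp
    moreover have "at 0 within {0..} = at (0::real) within {0<..}"
      by (rule at_within_nhd[of _ UNIV]) auto
    ultimately show ?thesis
      using True by (simp add: continuous_within)
  next
    case False
    with that have "isCont (\<lambda>x::real. x * ln x) x"
      by (intro continuous_intros) auto
    then show ?thesis
      by (rule continuous_at_imp_continuous_within)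
  qed
  moreover have "xlnx = (\<lambda>x. x * ln x)"
    by (simp add: xlnx_def fun_eq_iff)
  ultimately show ?thesis
    by (simp add: continuous_on_eq_continuous_within)
qed

lemma isCont_xlnx: "p > 0 \<Longrightarrow> isCont xlnx p"
  by (rule continuous_on_interior[OF continuous_on_xlnx]) simp

lemma continuous_on_costC: "continuous_on {0..1} costC"
proof -
  have "continuous_on {0..1} xlnx"
    by (rule continuous_on_subset[OF continuous_on_xlnx]) auto
  moreover have "continuous_on {0..1} (\<lambda>x::real. xlnx (1 - x))"
    by (rule continuous_on_compose2[OF continuous_on_xlnx]) (auto intro!: continuous_intros)
  ultimately show ?thesis
    unfolding costC_def[abs_def] by (intro continuous_intros)
qed

text \<open>Right continuity on \<open>[0,1)\<close> lets the sup norm be computed over the rationals, which is how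
  measurability of \<open>\<omega> \<mapsto> \<parallel>S\<^sub>m\<parallel>\<^sub>\<infinity>\<close> is obtained below.\<close>

definition right_cont_01 :: "(real \<Rightarrow> real) \<Rightarrow> bool" where
  "right_cont_01 h \<longleftrightarrow> (\<forall>t\<in>{0..<1}. (h \<longlongrightarrow> h t) (at_right t))"

lemma right_cont_01_sum: "(\<And>x. x \<in> S \<Longrightarrow> right_cont_01 (f x)) \<Longrightarrow> right_cont_01 (\<lambda>t. \<Sum>x\<in>S. f x t)"
  unfolding right_cont_01_def by (auto intro!: tendsto_sum)

lemma tendsto_at_right_affine_rescale:
  fixes h :: "real \<Rightarrow> real"
  assumes h: "(h \<longlongrightarrow> h ((t0 - a) / c)) (at_right ((t0 - a) / c))" and c: "c > 0"
  shows "((\<lambda>t. c * h ((t - a) / c)) \<longlongrightarrow> c * h ((t0 - a) / c)) (at_right t0)"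
proof -
  have "((\<lambda>t. (t - a) / c) \<longlongrightarrow> (t0 - a) / c) (at_right t0)"
    by (intro tendsto_intros) (use c in auto)
  moreover have "eventually (\<lambda>t. (t - a) / c > (t0 - a) / c) (at_right t0)"
    using eventually_at_right_less[of t0] by (rule eventually_mono) (simp add: c divide_strict_right_mono)
  ultimately have "filterlim (\<lambda>t. (t - a) / c) (at_right ((t0 - a) / c)) (at_right t0)"
    by (intro tendsto_imp_filterlim_at_right)
  with h have "((\<lambda>t. h ((t - a) / c)) \<longlongrightarrow> h ((t0 - a) / c)) (at_right t0)"
    by (rule filterlim_compose)
  then show ?thesis
    by (intro tendsto_intros)
qed

lemma eventually_at_right_less_than: "t0 < a \<Longrightarrow> eventually (\<lambda>t. t < a) (at_right (t0::real))"
  unfolding eventually_at_right by (intro exI[of _ a]) auto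

lemma right_cont_01_Top:
  assumes h: "right_cont_01 h"
  shows "right_cont_01 (Top u v i h)"
  unfolding right_cont_01_def
proof
  fix t0 :: real
  assume t0: "t0 \<in> {0..<1}"
  define a where "a = u v"
  have above: "eventually (\<lambda>t. t0 < t) (at_right t0)"
    by (rule eventually_at_right_less)
  have below: "eventually (\<lambda>t. t < a) (at_right t0)" if "t0 < a"
    using that by (rule eventually_at_right_less_than)
  consider "i = 1" "t0 < a" | "i = 1" "a \<le> t0" | "i \<noteq> 1" "t0 < a" | "i \<noteq> 1" "a \<le> t0"
    by linarith
  then show "(Top u v i h \<longlongrightarrow> Top u v i h t0) (at_right t0)"
  proof cases
    case 1
    then have "a > 0"
      using t0 by auto
    have "eventually (\<lambda>t. Top u v i h t = a * h ((t - 0) / a)) (at_right t0)"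
      using below[OF \<open>t0 < a\<close>] above
      by eventually_elim (use 1 \<open>a > 0\<close> in \<open>auto simp: Top_def a_def min_def\<close>)
    moreover have "((\<lambda>t. a * h ((t - 0) / a)) \<longlongrightarrow> a * h ((t0 - 0) / a)) (at_right t0)"
      using h t0 1 \<open>a > 0\<close> by (intro tendsto_at_right_affine_rescale) (auto simp: right_cont_01_def)
    moreover have "Top u v i h t0 = a * h ((t0 - 0) / a)"
      using 1 \<open>a > 0\<close> t0 by (simp add: Top_def a_def)
    ultimately show ?thesis
      by (simp add: tendsto_cong)
  next
    case 4
    then have "a < 1"
      using t0 by auto
    have "eventually (\<lambda>t. Top u v i h t = (1 - a) * h ((t - a) / (1 - a))) (at_right t0)"
      using above by eventually_elim (use 4 \<open>a < 1\<close> in \<open>auto simp: Top_def a_def max_def\<close>)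
    moreover have "((\<lambda>t. (1 - a) * h ((t - a) / (1 - a))) \<longlongrightarrow> (1 - a) * h ((t0 - a) / (1 - a))) (at_right t0)"
      using h t0 4 \<open>a < 1\<close> by (intro tendsto_at_right_affine_rescale) (auto simp: right_cont_01_def divide_less_eq_1)
    moreover have "Top u v i h t0 = (1 - a) * h ((t0 - a) / (1 - a))"
      using 4 \<open>a < 1\<close> t0 by (simp add: Top_def a_def)
    ultimately show ?thesis
      by (simp add: tendsto_cong)
  next
    case 2
    have "eventually (\<lambda>t. Top u v i h t = 0) (at_right t0)"
      using above by (rule eventually_mono) (use 2 in \<open>simp add: Top_def a_def\<close>)
    moreover have "Top u v i h t0 = 0"
      using 2 by (simp add: Top_def a_def)
    ultimately show ?thesis
      by (simp add: tendsto_cong)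
  next
    case 3
    have "eventually (\<lambda>t. Top u v i h t = 0) (at_right t0)"
      using below[OF \<open>t0 < a\<close>] by (rule eventually_mono) (use 3 in \<open>simp add: Top_def a_def\<close>)
    moreover have "Top u v i h t0 = 0"
      using 3 by (simp add: Top_def a_def)
    ultimately show ?thesis
      by (simp add: tendsto_cong)
  qed
qed

lemma right_cont_01_Lop: "right_cont_01 h \<Longrightarrow> right_cont_01 (Lop u v w h)"
  by (induction w arbitrary: h rule: rev_induct) (simp_all add: Lop_snoc right_cont_01_Top)

lemma right_cont_01_Cfun: "right_cont_01 (Cfun u v)"
  unfolding right_cont_01_def
proof
  fix t0 :: real
  assume t0: "t0 \<in> {0..<1}"
  define x where "x = u v"
  show "(Cfun u v \<longlongrightarrow> Cfun u v t0) (at_right t0)"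
  proof (cases "t0 < x")
    case True
    define g where "g t = costC x + 2 * (-1 + x + xlnx (1 - t) - xlnx (1 - x) - xlnx (x - t))" for t
    have "eventually (\<lambda>t. t < x) (at_right t0)"
      using True by (rule eventually_at_right_less_than)
    then have "eventually (\<lambda>t. Cfun u v t = g t) (at_right t0)"
      by eventually_elim (simp add: Cfun_def costC2_def g_def x_def)
    moreover have "((\<lambda>t. xlnx (c - t)) \<longlongrightarrow> xlnx (c - t0)) (at_right t0)" if "t0 < c" for c
      using that by (intro isCont_tendsto_compose[OF isCont_xlnx] tendsto_intros) auto
    then have "(g \<longlongrightarrow> g t0) (at_right t0)"
      unfolding g_def using True t0 by (intro tendsto_intros) auto
    moreover have "Cfun u v t0 = g t0"
      using True by (simp add: Cfun_def costC2_def g_def x_def)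
    ultimately show ?thesis
      by (simp add: tendsto_cong)
  next
    case False
    have "eventually (\<lambda>t. Cfun u v t = Cfun u v t0) (at_right t0)"
      using eventually_at_right_less[of t0]
      by eventually_elim (use False in \<open>simp add: Cfun_def costC2_def x_def\<close>)
    then show ?thesis
      by (simp add: tendsto_cong)
  qed
qed

lemma right_cont_01_Ssum: "right_cont_01 (Ssum u v m)"
  unfolding Ssum_def[abs_def] by (simp add: right_cont_01_sum right_cont_01_Lop right_cont_01_Cfun)

lemma supnorm_eq_SUP_Rats:
  assumes h: "right_cont_01 h"
  shows "supnorm h = (SUP t\<in>\<rat> \<inter> {0..1}. ennreal \<bar>h t\<bar>)"
proof (rule antisym)
  define S where "S = (SUP t\<in>\<rat> \<inter> {0..1}. ennreal \<bar>h t\<bar>)"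
  show "supnorm h \<le> S"
    unfolding supnorm_def
  proof (rule SUP_least)
    fix t :: real
    assume t: "t \<in> {0..1}"
    show "ennreal \<bar>h t\<bar> \<le> S"
    proof (cases "t = 1")
      case False
      with t have t1: "t \<in> {0..<1}"
        by auto
      define A where "A = \<rat> \<inter> {t<..<1}"
      have "t islimpt A"
        unfolding islimpt_approachable
      proof (intro allI impI)
        fix e :: real
        assume "e > 0"
        obtain q where "q \<in> \<rat>" "t < q" "q < min 1 (t + e)"
          using Rats_dense_in_real[of t "min 1 (t + e)"] t1 \<open>e > 0\<close> by auto
        then show "\<exists>x'\<in>A. x' \<noteq> t \<and> dist x' t < e"
          unfolding A_def by (intro bexI[of _ q]) (auto simp: dist_real_def)
      qed
      then have "\<not> trivial_limit (at t within A)"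
        by (simp add: trivial_limit_within)
      moreover have "(h \<longlongrightarrow> h t) (at t within A)"
      proof (rule tendsto_mono[OF at_le])
        show "A \<subseteq> {t<..}"
          by (auto simp: A_def)
        show "(h \<longlongrightarrow> h t) (at_right t)"
          using h t1 unfolding right_cont_01_def by blast
      qed
      then have "((\<lambda>s. ennreal \<bar>h s\<bar>) \<longlongrightarrow> ennreal \<bar>h t\<bar>) (at t within A)"
        by (intro tendsto_ennrealI tendsto_rabs)
      moreover have "ennreal \<bar>h s\<bar> \<le> S" if "s \<in> A" for s
        unfolding S_def by (rule SUP_upper) (use that t1 in \<open>auto simp: A_def\<close>)
      then have "eventually (\<lambda>s. ennreal \<bar>h s\<bar> \<le> S) (at t within A)"
        unfolding eventually_at_filter by (intro always_eventually) blast
      ultimately show ?thesis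
        by (rule tendsto_le[OF _ tendsto_const])
    qed (unfold S_def, rule SUP_upper, simp)
  qed
  show "S \<le> supnorm h"
    unfolding S_def supnorm_def by (rule SUP_subset_mono) auto
qed

section \<open>Measurability\<close>

lemma borel_measurable_xlnx [measurable]: "xlnx \<in> borel_measurable borel"
  unfolding xlnx_def by measurable

lemma borel_measurable_costC [measurable]: "costC \<in> borel_measurable borel"
  unfolding costC_def by measurable

lemma borel_measurable_costC2: "(\<lambda>p. costC2 (fst p) (snd p)) \<in> borel_measurable (borel \<Otimes>\<^sub>M borel)"
  unfolding costC2_def by measurable

locale measurable_labels =
  fixes N :: "'b measure" and lab :: "'b \<Rightarrow> nat list \<Rightarrow> real"
  assumes measurable_lab: "\<And>z. z \<in> Vset \<Longrightarrow> (\<lambda>x. lab x z) \<in> borel_measurable N"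
begin

lemma borel_measurable_ell: "v \<in> Vset \<Longrightarrow> w \<in> Vset \<Longrightarrow> (\<lambda>x. ell (lab x) v w) \<in> borel_measurable N"
proof (induction w rule: rev_induct)
  case (snoc i w)
  then have "(\<lambda>x. ell (lab x) v w) \<in> borel_measurable N" "(\<lambda>x. lab x (v @ w)) \<in> borel_measurable N"
    by (simp_all add: measurable_lab)
  then show ?case
    unfolding ell_snoc by measurable
qed simp

lemma borel_measurable_Qlim: "v \<in> Vset \<Longrightarrow> (\<lambda>x. Qlim (lab x) v) \<in> borel_measurable N"
  unfolding Qlim_def
proof (intro borel_measurable_lim_metric borel_measurable_sum)
  fix m w
  assume "v \<in> Vset" "w \<in> Vlt m"
  then have "v \<in> Vset" "w \<in> Vset"
    using Vlt_subset_Vset by auto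
  then have "(\<lambda>x. ell (lab x) v w) \<in> borel_measurable N" "(\<lambda>x. lab x (v @ w)) \<in> borel_measurable N"
    by (simp_all add: borel_measurable_ell measurable_lab)
  then show "(\<lambda>x. ell (lab x) v w * costC (lab x (v @ w))) \<in> borel_measurable N"
    by measurable
qed

text \<open>Joint measurability in \<open>(\<omega>, t)\<close> is what survives composition with \<open>Top\<close>, which rescales
  the time argument by a random label.\<close>

lemma measurable_Cfun_pair:
  assumes v: "v \<in> Vset"
  shows "(\<lambda>p. Cfun (lab (fst p)) v (snd p)) \<in> borel_measurable (N \<Otimes>\<^sub>M borel)"
proof -
  have [measurable]: "(\<lambda>x. lab x v) \<in> borel_measurable N"
    using v by (rule measurable_lab)
  have [measurable]: "(\<lambda>x. Qlim (lab x) (v @ [1])) \<in> borel_measurable N"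
    using v by (intro borel_measurable_Qlim) simp
  have "(\<lambda>p. (snd p, lab (fst p) v)) \<in> measurable (N \<Otimes>\<^sub>M borel) (borel \<Otimes>\<^sub>M borel)"
    by measurable
  from measurable_compose[OF this borel_measurable_costC2]
  have [measurable]: "(\<lambda>p. costC2 (snd p) (lab (fst p) v)) \<in> borel_measurable (N \<Otimes>\<^sub>M borel)"
    by simp
  show ?thesis
    unfolding Cfun_def by measurable
qed

lemma measurable_Top_pair:
  assumes H: "(\<lambda>p. H (fst p) (snd p)) \<in> borel_measurable (N \<Otimes>\<^sub>M borel)" and z: "z \<in> Vset"
  shows "(\<lambda>p. Top (lab (fst p)) z i (H (fst p)) (snd p)) \<in> borel_measurable (N \<Otimes>\<^sub>M borel)"
proof -
  have [measurable]: "(\<lambda>x. lab x z) \<in> borel_measurable N"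
    using z by (rule measurable_lab)
  have H_after: "(\<lambda>p. H (fst p) (g p)) \<in> borel_measurable (N \<Otimes>\<^sub>M borel)"
    if "g \<in> borel_measurable (N \<Otimes>\<^sub>M borel)" for g
    using measurable_compose[OF measurable_Pair[OF measurable_fst that] H] by simp
  have "(\<lambda>p. H (fst p) (min 1 (snd p / lab (fst p) z))) \<in> borel_measurable (N \<Otimes>\<^sub>M borel)"
    by (rule H_after) measurable
  moreover have "(\<lambda>p. H (fst p) (max 0 ((snd p - lab (fst p) z) / (1 - lab (fst p) z))))
      \<in> borel_measurable (N \<Otimes>\<^sub>M borel)"
    by (rule H_after) measurable
  ultimately show ?thesis
    unfolding Top_def by measurable
qed

lemma measurable_Lop_pair:
  assumes "v \<in> Vset" "w \<in> Vset" "(\<lambda>p. H (fst p) (snd p)) \<in> borel_measurable (N \<Otimes>\<^sub>M borel)"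
  shows "(\<lambda>p. Lop (lab (fst p)) v w (H (fst p)) (snd p)) \<in> borel_measurable (N \<Otimes>\<^sub>M borel)"
  using assms
proof (induction w arbitrary: H rule: rev_induct)
  case (snoc i w)
  then have "(\<lambda>p. Top (lab (fst p)) (v @ w) i (H (fst p)) (snd p)) \<in> borel_measurable (N \<Otimes>\<^sub>M borel)"
    by (intro measurable_Top_pair) auto
  with snoc show ?case
    unfolding Lop_snoc by simp
qed simp

lemma borel_measurable_Ssum: "v \<in> Vset \<Longrightarrow> (\<lambda>x. Ssum (lab x) v m t) \<in> borel_measurable N"
proof -
  assume v: "v \<in> Vset"
  have "(\<lambda>p. Ssum (lab (fst p)) v m (snd p)) \<in> borel_measurable (N \<Otimes>\<^sub>M borel)"
    unfolding Ssum_def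
  proof (intro borel_measurable_sum)
    fix w
    assume "w \<in> Vlen m"
    then have "w \<in> Vset"
      using Vlen_subset_Vset by blast
    with v show "(\<lambda>p. Lop (lab (fst p)) v w (Cfun (lab (fst p)) (v @ w)) (snd p)) \<in> borel_measurable (N \<Otimes>\<^sub>M borel)"
      by (intro measurable_Lop_pair measurable_Cfun_pair) simp_all
  qed
  from measurable_compose[OF measurable_Pair[OF measurable_ident_sets measurable_const] this]
  show ?thesis
    by simp
qed

lemma borel_measurable_supnorm_Ssum: "v \<in> Vset \<Longrightarrow> (\<lambda>x. supnorm (Ssum (lab x) v m)) \<in> borel_measurable N"
  unfolding supnorm_eq_SUP_Rats[OF right_cont_01_Ssum]
  by (intro borel_measurable_SUP countable_Int1 countable_rat) (use borel_measurable_Ssum in measurable)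

end

section \<open>Integrals against the uniform distribution\<close>

text \<open>An antiderivative of \<open>C\<close> on \<open>(0,1)\<close>, written with \<open>xlnx\<close> so that it is visibly continuous on \<open>[0,1]\<close>.\<close>

definition costC_primitive :: "real \<Rightarrow> real" where
  "costC_primitive x = x + x * xlnx x - x\<^sup>2 / 2 - (1 - x) * xlnx (1 - x) + (1 - x)\<^sup>2 / 2"

lemma costC_primitive_has_derivative:
  assumes x: "x \<in> {0<..<1}"
  shows "(costC_primitive has_real_derivative costC x) (at x)"
proof -
  have d1: "((\<lambda>x. x\<^sup>2 * ln x) has_real_derivative 2 * x * ln x + x) (at x)"
    using x by (auto intro!: derivative_eq_intros simp: power2_eq_square field_simps)
  have e1: "((\<lambda>x. (1 - x)\<^sup>2) has_real_derivative -2 * (1 - x)) (at x)"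
    by (auto intro!: derivative_eq_intros)
  have e2: "((\<lambda>x. ln (1 - x)) has_real_derivative -1 / (1 - x)) (at x)"
    using x by (auto intro!: derivative_eq_intros simp: field_simps)
  have "-2 * (1 - x) * ln (1 - x) + -1 / (1 - x) * (1 - x)\<^sup>2 = -2 * (1 - x) * ln (1 - x) - (1 - x)"
    using x by (simp add: power2_eq_square)
  then have d2: "((\<lambda>x. (1 - x)\<^sup>2 * ln (1 - x)) has_real_derivative -2 * (1 - x) * ln (1 - x) - (1 - x)) (at x)"
    using DERIV_mult[OF e1 e2] by (simp only:)
  have d3: "((\<lambda>x. x\<^sup>2 / 2) has_real_derivative x) (at x)"
    by (auto intro!: derivative_eq_intros)
  have d4: "((\<lambda>x. (1 - x)\<^sup>2 / 2) has_real_derivative - (1 - x)) (at x)"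
    by (auto intro!: derivative_eq_intros)
  have "((\<lambda>x. x + x\<^sup>2 * ln x - x\<^sup>2 / 2 - (1 - x)\<^sup>2 * ln (1 - x) + (1 - x)\<^sup>2 / 2)
      has_real_derivative 1 + (2 * x * ln x + x) - x - (-2 * (1 - x) * ln (1 - x) - (1 - x)) + - (1 - x)) (at x)"
    by (intro DERIV_add DERIV_diff DERIV_ident d1 d2 d3 d4)
  moreover have "1 + (2 * x * ln x + x) - x - (-2 * (1 - x) * ln (1 - x) - (1 - x)) + - (1 - x) = costC x"
    using x by (simp add: costC_def xlnx_def algebra_simps)
  ultimately have "((\<lambda>x. x + x\<^sup>2 * ln x - x\<^sup>2 / 2 - (1 - x)\<^sup>2 * ln (1 - x) + (1 - x)\<^sup>2 / 2)
      has_real_derivative costC x) (at x)"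
    by simp
  moreover have "eventually (\<lambda>y. y + y\<^sup>2 * ln y - y\<^sup>2 / 2 - (1 - y)\<^sup>2 * ln (1 - y) + (1 - y)\<^sup>2 / 2
      = costC_primitive y) (nhds x)"
  proof (rule eventually_mono)
    show "eventually (\<lambda>y. y \<in> {0<..<1}) (nhds x)"
      using x by (intro eventually_nhds_in_open) auto
  qed (simp add: costC_primitive_def xlnx_def power2_eq_square)
  ultimately show ?thesis
    by (subst (asm) DERIV_cong_ev[OF refl _ refl])
qed

lemma has_integral_costC: "(costC has_integral 0) {0..1}"
proof -
  have xlnx: "continuous_on {0..1} xlnx"
    by (rule continuous_on_subset[OF continuous_on_xlnx]) auto
  have xlnx_reflected: "continuous_on {0..1} (\<lambda>x::real. xlnx (1 - x))"
    by (rule continuous_on_compose2[OF continuous_on_xlnx]) (auto intro!: continuous_intros)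
  have "continuous_on {0..1} costC_primitive"
    unfolding costC_primitive_def[abs_def] by (intro continuous_intros xlnx xlnx_reflected) simp_all
  moreover have "(costC_primitive has_vector_derivative costC x) (at x)" if "x \<in> {0<..<1}" for x
    using costC_primitive_has_derivative[OF that] by (simp add: has_real_derivative_iff_has_vector_derivative)
  ultimately have "(costC has_integral (costC_primitive 1 - costC_primitive 0)) {0..1}"
    by (intro fundamental_theorem_of_calculus_interior) auto
  then show ?thesis
    by (simp add: costC_primitive_def xlnx_def)
qed

lemma has_integral_power2_01: "((\<lambda>x::real. x\<^sup>2) has_integral 1/3) {0..1}"
proof -
  have "((\<lambda>x::real. x ^ 3 / 3) has_vector_derivative x\<^sup>2) (at x)" for x
    unfolding has_real_derivative_iff_has_vector_derivative[symmetric]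
    by (auto intro!: derivative_eq_intros simp: power2_eq_square)
  then have "((\<lambda>x::real. x\<^sup>2) has_integral (1 ^ 3 / 3 - 0 ^ 3 / 3)) {0..1}"
    by (intro fundamental_theorem_of_calculus_interior continuous_intros) auto
  then show ?thesis
    by simp
qed

lemma has_integral_power2_one_minus_01: "((\<lambda>x::real. (1 - x)\<^sup>2) has_integral 1/3) {0..1}"
proof -
  have "((\<lambda>x::real. - ((1 - x) ^ 3 / 3)) has_vector_derivative (1 - x)\<^sup>2) (at x)" for x
    unfolding has_real_derivative_iff_has_vector_derivative[symmetric]
    by (auto intro!: derivative_eq_intros simp: power2_eq_square field_simps)
  then have "((\<lambda>x::real. (1 - x)\<^sup>2) has_integral (- ((1 - 1) ^ 3 / 3) - - ((1 - 0) ^ 3 / 3))) {0..1}"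
    by (intro fundamental_theorem_of_calculus_interior continuous_intros) auto
  then show ?thesis
    by simp
qed

abbreviation unif01 :: "real measure" where
  "unif01 \<equiv> uniform_measure lborel {0..1}"

lemma prob_space_unif01: "prob_space unif01"
  by (rule prob_space_uniform_measure) auto

lemma unif01_eq_density: "unif01 = density lborel (\<lambda>x. ennreal (indicator {0..1} x))"
proof -
  have "(\<lambda>x. indicator {0..1::real} x / (1::ennreal)) = (\<lambda>x. ennreal (indicator {0..1} x))"
    by (simp add: divide_ennreal_def fun_eq_iff ennreal_indicator)
  then show ?thesis
    unfolding uniform_measure_def by simp
qed

lemma integral_unif01_eq:
  fixes f :: "real \<Rightarrow> real"
  assumes f: "continuous_on {0..1} f" "(f has_integral I) {0..1}" "f \<in> borel_measurable borel"
  shows "integral\<^sup>L unif01 f = I"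
proof -
  have "integrable lborel (\<lambda>x. indicator {0..1::real} x *\<^sub>R f x)"
    by (intro borel_integrable_compact f) auto
  from has_integral_integral_lborel[OF this]
  have "((\<lambda>x. indicator {0..1::real} x *\<^sub>R f x) has_integral
      integral\<^sup>L lborel (\<lambda>x. indicator {0..1::real} x *\<^sub>R f x)) UNIV" .
  moreover have "((\<lambda>x. indicator {0..1::real} x *\<^sub>R f x) has_integral I) UNIV"
  proof -
    have "(\<lambda>x. indicator {0..1::real} x *\<^sub>R f x) = (\<lambda>x. if x \<in> {0..1} then f x else 0)"
      by (auto simp: indicator_def fun_eq_iff)
    then show ?thesis
      using has_integral_restrict_UNIV[THEN iffD2, OF f(2)] by simp
  qed
  ultimately have "integral\<^sup>L lborel (\<lambda>x. indicator {0..1::real} x *\<^sub>R f x) = I"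
    using has_integral_unique by blast
  moreover have "integral\<^sup>L unif01 f = integral\<^sup>L lborel (\<lambda>x. indicator {0..1::real} x *\<^sub>R f x)"
    unfolding unif01_eq_density using f(3) by (subst integral_density) auto
  ultimately show ?thesis
    by simp
qed

lemma nn_integral_unif01_eq:
  assumes "(f has_integral I) {0..1}" "\<And>x. x \<in> {0..1} \<Longrightarrow> 0 \<le> f x" "f \<in> borel_measurable borel"
  shows "(\<integral>\<^sup>+x. ennreal (f x) \<partial>unif01) = ennreal I"
proof -
  have "(\<integral>\<^sup>+x. ennreal (f x) \<partial>unif01) = (\<integral>\<^sup>+x. ennreal (indicator {0..1} x * f x) \<partial>lborel)"
    unfolding unif01_eq_density using assms(3)
    by (subst nn_integral_density) (auto simp: ennreal_mult' intro!: nn_integral_cong)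
  also have "\<dots> = ennreal I"
    using nn_integral_has_integral_lebesgue[OF assms(2,1)] by simp
  finally show ?thesis .
qed

lemma integral_unif01_power2: "integral\<^sup>L unif01 (\<lambda>x. x\<^sup>2) = 1/3"
  by (rule integral_unif01_eq[OF _ has_integral_power2_01]) (auto intro!: continuous_intros)

lemma integral_unif01_power2_one_minus: "integral\<^sup>L unif01 (\<lambda>x. (1 - x)\<^sup>2) = 1/3"
  by (rule integral_unif01_eq[OF _ has_integral_power2_one_minus_01]) (auto intro!: continuous_intros)

lemma integral_unif01_costC: "integral\<^sup>L unif01 costC = 0"
  by (rule integral_unif01_eq[OF continuous_on_costC has_integral_costC borel_measurable_costC])

lemma nn_integral_unif01_power2: "(\<integral>\<^sup>+x. ennreal (x\<^sup>2) \<partial>unif01) = ennreal (1/3)"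
  by (rule nn_integral_unif01_eq[OF has_integral_power2_01]) auto

lemma nn_integral_unif01_power2_one_minus: "(\<integral>\<^sup>+x. ennreal ((1 - x)\<^sup>2) \<partial>unif01) = ennreal (1/3)"
  by (rule nn_integral_unif01_eq[OF has_integral_power2_one_minus_01]) auto

section \<open>The i.i.d. uniform labels\<close>

lemma (in prob_space) indep_var_nn_integral:
  assumes indep: "indep_var S X T Y"
    and f: "f \<in> borel_measurable S" and g: "g \<in> borel_measurable T"
  shows "(\<integral>\<^sup>+\<omega>. f (X \<omega>) * g (Y \<omega>) \<partial>M) = (\<integral>\<^sup>+\<omega>. f (X \<omega>) \<partial>M) * (\<integral>\<^sup>+\<omega>. g (Y \<omega>) \<partial>M)"
proof -
  have [measurable]: "X \<in> measurable M S" "Y \<in> measurable M T" "f \<in> borel_measurable S" "g \<in> borel_measurable T"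
    and joint: "distr M S X \<Otimes>\<^sub>M distr M T Y = distr M (S \<Otimes>\<^sub>M T) (\<lambda>x. (X x, Y x))"
    using indep f g by (auto simp: indep_var_distribution_eq)
  interpret X: prob_space "distr M S X"
    by (rule prob_space_distr) simp
  interpret Y: prob_space "distr M T Y"
    by (rule prob_space_distr) simp
  interpret pair_sigma_finite "distr M S X" "distr M T Y" ..
  have "(\<integral>\<^sup>+\<omega>. f (X \<omega>) * g (Y \<omega>) \<partial>M) = (\<integral>\<^sup>+p. f (fst p) * g (snd p) \<partial>(distr M S X \<Otimes>\<^sub>M distr M T Y))"
    by (simp add: joint nn_integral_distr)
  also have "\<dots> = (\<integral>\<^sup>+x. \<integral>\<^sup>+y. f x * g y \<partial>distr M T Y \<partial>distr M S X)"
    by (subst Y.nn_integral_fst[symmetric]) auto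
  also have "\<dots> = (\<integral>\<^sup>+x. f x \<partial>distr M S X) * (\<integral>\<^sup>+y. g y \<partial>distr M T Y)"
    by (simp add: nn_integral_cmult nn_integral_multc)
  also have "\<dots> = (\<integral>\<^sup>+\<omega>. f (X \<omega>) \<partial>M) * (\<integral>\<^sup>+\<omega>. g (Y \<omega>) \<partial>M)"
    by (simp add: nn_integral_distr)
  finally show ?thesis .
qed

lemma measurable_labels_PiM: "measurable_labels (PiM Vset (\<lambda>_. borel)) (\<lambda>r. r)"
  by unfold_locales (rule measurable_component_singleton)

lemma measurable_labels_PiM_shift:
  "(#) i ` Vset \<subseteq> B \<Longrightarrow> measurable_labels (PiM B (\<lambda>_. borel)) (\<lambda>r z. r (i # z))"
  by unfold_locales (auto intro!: measurable_component_singleton)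

lemma measurable_labels_PiM_restrict:
  "measurable_labels (PiM B (\<lambda>_. borel)) (\<lambda>r z. if z \<in> B then r z else 0)"
proof
  show "(\<lambda>r. if z \<in> B then r z else 0) \<in> borel_measurable (PiM B (\<lambda>_. borel))" for z
    by (cases "z \<in> B") (auto intro: measurable_component_singleton)
qed

lemma borel_measurable_ell_PiM:
  assumes "path_above v w \<subseteq> B" "v \<in> Vset" "w \<in> Vset"
  shows "(\<lambda>r. ell r v w) \<in> borel_measurable (PiM B (\<lambda>_. borel))"
proof -
  have "(\<lambda>r. ell (\<lambda>z. if z \<in> B then r z else 0) v w) \<in> borel_measurable (PiM B (\<lambda>_. borel))"
    by (rule measurable_labels.borel_measurable_ell[OF measurable_labels_PiM_restrict assms(2,3)])
  moreover have "ell (\<lambda>z. if z \<in> B then r z else 0) v w = ell r v w" for r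
    using assms(1) by (intro ell_cong_path_above) auto
  ultimately show ?thesis
    by simp
qed

locale iid_uniform_tree = prob_space M for M :: "'a measure" +
  fixes U :: "nat list \<Rightarrow> 'a \<Rightarrow> real"
  assumes measurable_U: "\<And>v. v \<in> Vset \<Longrightarrow> U v \<in> borel_measurable M"
    and indep_U: "indep_vars (\<lambda>_. borel) U Vset"
    and distr_U: "\<And>v. v \<in> Vset \<Longrightarrow> distr M borel (U v) = unif01"
begin

sublocale labels: measurable_labels M "\<lambda>\<omega> v. U v \<omega>"
  by unfold_locales (simp add: measurable_U)

lemma measurable_labels_subtree: "i = 1 \<or> i = 2 \<Longrightarrow> measurable_labels M (\<lambda>\<omega> v. U (i # v) \<omega>)"
  by unfold_locales (auto intro!: measurable_U)

lemma AE_U_in_unit: "AE \<omega> in M. \<forall>v\<in>Vset. U v \<omega> \<in> {0..1}"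
proof (subst AE_ball_countable[OF countable_Vset], intro ballI)
  fix v
  assume v: "v \<in> Vset"
  have "AE x in distr M borel (U v). x \<in> {0..1}"
    unfolding distr_U[OF v] by (rule AE_uniform_measureI) auto
  then show "AE \<omega> in M. U v \<omega> \<in> {0..1}"
    using measurable_U[OF v] by (subst (asm) AE_distr_iff) auto
qed

lemma nn_integral_U:
  "v \<in> Vset \<Longrightarrow> g \<in> borel_measurable borel \<Longrightarrow> (\<integral>\<^sup>+\<omega>. g (U v \<omega>) \<partial>M) = (\<integral>\<^sup>+x. g x \<partial>unif01)"
  using nn_integral_distr[of "U v" M borel g] measurable_U[of v] distr_U[of v] by simp

lemma integral_U:
  "v \<in> Vset \<Longrightarrow> (g :: real \<Rightarrow> real) \<in> borel_measurable borel \<Longrightarrow> (\<integral>\<omega>. g (U v \<omega>) \<partial>M) = integral\<^sup>L unif01 g"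
  using integral_distr[of "U v" M borel g] measurable_U[of v] distr_U[of v] by simp

lemma indep_var_blocks:
  assumes "A \<inter> B = {}" "A \<subseteq> Vset" "B \<subseteq> Vset"
    and "f \<in> borel_measurable (PiM A (\<lambda>_. borel))" "g \<in> borel_measurable (PiM B (\<lambda>_. borel))"
  shows "indep_var borel (\<lambda>\<omega>. f (restrict (\<lambda>i. U i \<omega>) A)) borel (\<lambda>\<omega>. g (restrict (\<lambda>i. U i \<omega>) B))"
  using indep_var_compose[OF indep_var_restrict[OF indep_U assms(1-3)] assms(4,5)] by (simp add: comp_def)

lemma nn_integral_blocks_mult:
  assumes "A \<inter> B = {}" "A \<subseteq> Vset" "B \<subseteq> Vset"
    and "f \<in> borel_measurable (PiM A (\<lambda>_. borel))" "g \<in> borel_measurable (PiM B (\<lambda>_. borel))"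
  shows "(\<integral>\<^sup>+\<omega>. f (restrict (\<lambda>i. U i \<omega>) A) * g (restrict (\<lambda>i. U i \<omega>) B) \<partial>M)
     = (\<integral>\<^sup>+\<omega>. f (restrict (\<lambda>i. U i \<omega>) A) \<partial>M) * (\<integral>\<^sup>+\<omega>. g (restrict (\<lambda>i. U i \<omega>) B) \<partial>M)"
  by (rule indep_var_nn_integral[OF indep_var_restrict[OF indep_U assms(1-3)] assms(4,5)])

lemma integral_blocks_mult:
  fixes f g :: "(nat list \<Rightarrow> real) \<Rightarrow> real"
  assumes "A \<inter> B = {}" "A \<subseteq> Vset" "B \<subseteq> Vset"
    and "f \<in> borel_measurable (PiM A (\<lambda>_. borel))" "g \<in> borel_measurable (PiM B (\<lambda>_. borel))"
    and "integrable M (\<lambda>\<omega>. f (restrict (\<lambda>i. U i \<omega>) A))" "integrable M (\<lambda>\<omega>. g (restrict (\<lambda>i. U i \<omega>) B))"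
  shows "(\<integral>\<omega>. f (restrict (\<lambda>i. U i \<omega>) A) * g (restrict (\<lambda>i. U i \<omega>) B) \<partial>M)
     = (\<integral>\<omega>. f (restrict (\<lambda>i. U i \<omega>) A) \<partial>M) * (\<integral>\<omega>. g (restrict (\<lambda>i. U i \<omega>) B) \<partial>M)"
  by (rule indep_var_lebesgue_integral[OF indep_var_blocks[OF assms(1-5)] assms(6,7)])

lemma distr_restrict_U: "distr M (PiM Vset (\<lambda>_. borel)) (\<lambda>\<omega>. restrict (\<lambda>v. U v \<omega>) Vset) = PiM Vset (\<lambda>_. unif01)"
proof -
  have "distr M (PiM Vset (\<lambda>_. borel)) (\<lambda>\<omega>. restrict (\<lambda>v. U v \<omega>) Vset) = PiM Vset (\<lambda>v. distr M borel (U v))"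
  proof -
    have "Vset \<noteq> {}"
      using Vset_Nil by blast
    then show ?thesis
      using indep_U by (subst (asm) indep_vars_iff_distr_eq_PiM') (auto simp: measurable_U)
  qed
  also have "\<dots> = PiM Vset (\<lambda>_. unif01)"
    by (rule PiM_cong) (auto simp: distr_U)
  finally show ?thesis .
qed

text \<open>Self-similarity in distribution: the labels of the subtree rooted at \<open>i\<close> are again i.i.d.
  uniform, since \<open>(#) i\<close> maps \<open>Vset\<close> injectively into itself.\<close>

lemma distr_restrict_U_subtree:
  assumes i: "i = 1 \<or> i = 2"
  shows "distr M (PiM Vset (\<lambda>_. borel)) (\<lambda>\<omega>. restrict (\<lambda>v. U (i # v) \<omega>) Vset) = PiM Vset (\<lambda>_. unif01)"
proof -
  let ?P = "PiM Vset (\<lambda>_. borel :: real measure)" and ?Q = "PiM Vset (\<lambda>_. unif01)"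
  define shift where "shift = (\<lambda>r :: nat list \<Rightarrow> real. restrict (\<lambda>n. r (i # n)) Vset)"
  have m_U: "(\<lambda>\<omega>. restrict (\<lambda>v. U v \<omega>) Vset) \<in> measurable M ?P"
    by (intro measurable_restrict) (auto simp: measurable_U)
  have m_shift: "shift \<in> measurable ?P ?P"
    unfolding shift_def using i by (intro measurable_restrict measurable_component_singleton) auto
  have "distr M ?P (\<lambda>\<omega>. restrict (\<lambda>v. U (i # v) \<omega>) Vset) = distr M ?P (shift \<circ> (\<lambda>\<omega>. restrict (\<lambda>v. U v \<omega>) Vset))"
    using i by (intro distr_cong) (auto simp: shift_def fun_eq_iff restrict_def)
  also have "\<dots> = distr ?Q ?P shift"
    by (simp add: distr_distr[OF m_shift m_U, symmetric] distr_restrict_U)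
  also have "\<dots> = distr ?Q ?Q shift"
    by (rule distr_cong) (auto intro!: sets_PiM_cong)
  also have "\<dots> = ?Q"
    using distr_PiM_reindex[of Vset "\<lambda>_. unif01" "\<lambda>n. i # n" Vset] i prob_space_unif01
    by (auto simp: inj_on_def shift_def)
  finally show ?thesis .
qed

end

section \<open>Geometric decay of the second moments\<close>

context iid_uniform_tree
begin

definition sq_moment :: "nat \<Rightarrow> ennreal" where
  "sq_moment m = (\<integral>\<^sup>+\<omega>. supnorm (Ssum (\<lambda>v. U v \<omega>) [] m) ^ 2 \<partial>M)"

lemma sq_moment_subtree:
  assumes i: "i = 1 \<or> i = 2"
  shows "(\<integral>\<^sup>+\<omega>. supnorm (Ssum (\<lambda>v. U (i # v) \<omega>) [] m) ^ 2 \<partial>M) = sq_moment m"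
proof -
  let ?P = "PiM Vset (\<lambda>_. borel :: real measure)"
  define F where "F r = supnorm (Ssum r [] m) ^ 2" for r
  have [measurable]: "F \<in> borel_measurable ?P"
    unfolding F_def[abs_def]
    using measurable_labels.borel_measurable_supnorm_Ssum[OF measurable_labels_PiM] by measurable
  have [measurable]: "(\<lambda>\<omega>. restrict (\<lambda>v. U (i # v) \<omega>) Vset) \<in> measurable M ?P"
    "(\<lambda>\<omega>. restrict (\<lambda>v. U v \<omega>) Vset) \<in> measurable M ?P"
    using i by (auto intro!: measurable_restrict simp: measurable_U)
  have restrict: "F (restrict r Vset) = F r" for r
    unfolding F_def by (subst Ssum_cong_Vset[of "restrict r Vset" r]) simp_all
  have "(\<integral>\<^sup>+\<omega>. F (\<lambda>v. U (i # v) \<omega>) \<partial>M) = (\<integral>\<^sup>+r. F r \<partial>distr M ?P (\<lambda>\<omega>. restrict (\<lambda>v. U (i # v) \<omega>) Vset))"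
    by (simp add: nn_integral_distr restrict)
  also have "\<dots> = (\<integral>\<^sup>+r. F r \<partial>distr M ?P (\<lambda>\<omega>. restrict (\<lambda>v. U v \<omega>) Vset))"
    by (simp add: distr_restrict_U_subtree[OF i] distr_restrict_U)
  also have "\<dots> = (\<integral>\<^sup>+\<omega>. F (\<lambda>v. U v \<omega>) \<partial>M)"
    by (simp add: nn_integral_distr restrict)
  finally show ?thesis
    by (simp add: F_def sq_moment_def)
qed

text \<open>The root label is independent of the labels of each subtree.\<close>

lemma nn_integral_root_mult_subtree:
  assumes i: "i = 1 \<or> i = 2" and h[measurable]: "h \<in> borel_measurable borel"
  shows "(\<integral>\<^sup>+\<omega>. h (U [] \<omega>) * supnorm (Ssum (\<lambda>v. U (i # v) \<omega>) [] k) ^ 2 \<partial>M)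
     = (\<integral>\<^sup>+\<omega>. h (U [] \<omega>) \<partial>M) * sq_moment k"
proof -
  define B where "B = Vset - {[]}"
  define G where "G r = supnorm (Ssum (\<lambda>z. r (i # z)) [] k) ^ 2" for r
  have iB: "(#) i ` Vset \<subseteq> B"
    using i by (auto simp: B_def)
  have f: "(\<lambda>r. h (r [])) \<in> borel_measurable (PiM {[]} (\<lambda>_. borel :: real measure))"
    by measurable
  have g: "G \<in> borel_measurable (PiM B (\<lambda>_. borel :: real measure))"
    unfolding G_def[abs_def]
    using measurable_labels.borel_measurable_supnorm_Ssum[OF measurable_labels_PiM_shift[OF iB]] by measurable
  have G: "G (restrict (\<lambda>j. U j \<omega>) B) = supnorm (Ssum (\<lambda>v. U (i # v) \<omega>) [] k) ^ 2" for \<omega>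
    unfolding G_def using iB by (subst Ssum_cong_Vset[where u' = "\<lambda>v. U (i # v) \<omega>"]) auto
  have root: "restrict (\<lambda>j. U j \<omega>) {[]} [] = U [] \<omega>" for \<omega>
    by simp
  have "(\<integral>\<^sup>+\<omega>. h (restrict (\<lambda>j. U j \<omega>) {[]} []) * G (restrict (\<lambda>j. U j \<omega>) B) \<partial>M)
      = (\<integral>\<^sup>+\<omega>. h (restrict (\<lambda>j. U j \<omega>) {[]} []) \<partial>M) * (\<integral>\<^sup>+\<omega>. G (restrict (\<lambda>j. U j \<omega>) B) \<partial>M)"
    by (rule nn_integral_blocks_mult[OF _ _ _ f g]) (auto simp: B_def)
  then show ?thesis
    by (simp only: G root sq_moment_subtree[OF i])
qed

lemma sq_moment_Suc_le: "sq_moment (Suc k) \<le> ennreal (2/3) * sq_moment k"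
proof -
  have [measurable]: "U [] \<in> borel_measurable M"
    by (simp add: measurable_U)
  have [measurable]: "(\<lambda>\<omega>. supnorm (Ssum (\<lambda>v. U (i # v) \<omega>) [] k) ^ 2) \<in> borel_measurable M" if "i = 1 \<or> i = 2" for i
    using measurable_labels.borel_measurable_supnorm_Ssum[OF measurable_labels_subtree[OF that]] by measurable
  have "sq_moment (Suc k) \<le> (\<integral>\<^sup>+\<omega>. ennreal ((U [] \<omega>)\<^sup>2) * supnorm (Ssum (\<lambda>v. U (1 # v) \<omega>) [] k) ^ 2
      + ennreal ((1 - U [] \<omega>)\<^sup>2) * supnorm (Ssum (\<lambda>v. U (2 # v) \<omega>) [] k) ^ 2 \<partial>M)"
    unfolding sq_moment_def
  proof (rule nn_integral_mono_AE)
    show "AE \<omega> in M. supnorm (Ssum (\<lambda>v. U v \<omega>) [] (Suc k)) ^ 2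
        \<le> ennreal ((U [] \<omega>)\<^sup>2) * supnorm (Ssum (\<lambda>v. U (1 # v) \<omega>) [] k) ^ 2
          + ennreal ((1 - U [] \<omega>)\<^sup>2) * supnorm (Ssum (\<lambda>v. U (2 # v) \<omega>) [] k) ^ 2"
      using AE_U_in_unit
    proof eventually_elim
      case (elim \<omega>)
      then have "0 \<le> U [] \<omega>" "U [] \<omega> \<le> 1"
        by auto
      from supnorm_Ssum_Suc_sq_le[of "\<lambda>v. U v \<omega>" "[]", OF this, of k] show ?case
        by (simp add: Ssum_shift[where v = "[_]" and v' = "[]", simplified])
    qed
  qed
  also have "\<dots> = (\<integral>\<^sup>+\<omega>. ennreal ((U [] \<omega>)\<^sup>2) \<partial>M) * sq_moment k + (\<integral>\<^sup>+\<omega>. ennreal ((1 - U [] \<omega>)\<^sup>2) \<partial>M) * sq_moment k"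
    using nn_integral_root_mult_subtree[of 1 "\<lambda>x. ennreal (x\<^sup>2)" k]
      nn_integral_root_mult_subtree[of 2 "\<lambda>x. ennreal ((1 - x)\<^sup>2)" k]
    by (simp add: nn_integral_add)
  also have "\<dots> = ennreal (1/3) * sq_moment k + ennreal (1/3) * sq_moment k"
    using nn_integral_U[of "[]" "\<lambda>x. ennreal (x\<^sup>2)"] nn_integral_U[of "[]" "\<lambda>x. ennreal ((1 - x)\<^sup>2)"]
    by (simp add: nn_integral_unif01_power2 nn_integral_unif01_power2_one_minus)
  also have "\<dots> = ennreal (2/3) * sq_moment k"
    by (simp add: distrib_right[symmetric] ennreal_plus[symmetric] del: ennreal_plus)
  finally show ?thesis .
qed

end

section \<open>Second moment of the Quicksort limit\<close>

lemma nn_integral_le_of_sq_le: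
  assumes "prob_space M" and f[measurable]: "f \<in> borel_measurable M" and c: "c > 0"
    and sq: "(\<integral>\<^sup>+x. f x ^ 2 \<partial>M) \<le> ennreal (c ^ 2)"
  shows "(\<integral>\<^sup>+x. f x \<partial>M) \<le> ennreal c"
proof -
  interpret prob_space M by fact
  have am_gm: "ennreal (2 * c) * y \<le> y ^ 2 + ennreal (c ^ 2)" for y
  proof (cases y)
    case (real r)
    have "2 * c * r \<le> r ^ 2 + c ^ 2"
      using sum_squares_ge_zero[of "r - c" 0] by (simp add: power2_eq_square algebra_simps)
    with real c show ?thesis
      by (simp add: ennreal_mult[symmetric] ennreal_power ennreal_plus[symmetric] del: ennreal_plus)
  qed (use c in \<open>simp add: ennreal_mult_top\<close>)
  have "ennreal (2 * c) * (\<integral>\<^sup>+x. f x \<partial>M) = (\<integral>\<^sup>+x. ennreal (2 * c) * f x \<partial>M)"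
    by (rule nn_integral_cmult[symmetric]) simp
  also have "\<dots> \<le> (\<integral>\<^sup>+x. f x ^ 2 + ennreal (c ^ 2) \<partial>M)"
    by (intro nn_integral_mono am_gm)
  also have "\<dots> = (\<integral>\<^sup>+x. f x ^ 2 \<partial>M) + ennreal (c ^ 2)"
    by (subst nn_integral_add) (auto simp: emeasure_space_1)
  also have "\<dots> \<le> ennreal (c ^ 2) + ennreal (c ^ 2)"
    using sq by (intro add_mono) auto
  also have "\<dots> = ennreal (2 * c) * ennreal c"
    using c by (simp add: ennreal_mult[symmetric] ennreal_plus[symmetric] power2_eq_square del: ennreal_plus)
  finally show ?thesis
    using c by (subst (asm) ennreal_mult_le_mult_iff) auto
qed

context iid_uniform_tree
begin

lemma AE_ell_in_unit: "v \<in> Vset \<Longrightarrow> w \<in> Vset \<Longrightarrow> AE \<omega> in M. 0 \<le> ell (\<lambda>z. U z \<omega>) v w \<and> ell (\<lambda>z. U z \<omega>) v w \<le> 1"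
  using AE_U_in_unit by eventually_elim (rule ell_in_unit, auto)

lemma AE_abs_costC_U_le: "z \<in> Vset \<Longrightarrow> AE \<omega> in M. \<bar>costC (U z \<omega>)\<bar> \<le> 3"
  using AE_U_in_unit by eventually_elim (auto intro: costC_abs_le)

lemma integral_ell_sq:
  assumes v: "v \<in> Vset"
  shows "w \<in> Vset \<Longrightarrow> (\<integral>\<omega>. (ell (\<lambda>z. U z \<omega>) v w)\<^sup>2 \<partial>M) = (1/3) ^ length w"
proof (induction w rule: rev_induct)
  case (snoc i w)
  then have w: "w \<in> Vset"
    by simp
  define fi where "fi x = (if i = 1 then x else 1 - x)" for x :: real
  define A where "A = {v @ w}"
  define B where "B = path_above v w"
  have AB: "A \<inter> B = {}" "A \<subseteq> Vset" "B \<subseteq> Vset"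
    using not_in_path_above[of w w v] path_above_subset_Vset[OF v w] v w by (auto simp: A_def B_def)
  have f: "(\<lambda>r. (fi (r (v @ w)))\<^sup>2) \<in> borel_measurable (PiM A (\<lambda>_. borel))"
    unfolding fi_def A_def by measurable
  have g: "(\<lambda>r. (ell r v w)\<^sup>2) \<in> borel_measurable (PiM B (\<lambda>_. borel))"
    using borel_measurable_ell_PiM[of v w B] v w by (simp add: B_def)
  have rA: "restrict (\<lambda>j. U j \<omega>) A (v @ w) = U (v @ w) \<omega>" for \<omega>
    by (simp add: A_def)
  have rB: "ell (restrict (\<lambda>j. U j \<omega>) B) v w = ell (\<lambda>z. U z \<omega>) v w" for \<omega>
    by (simp add: B_def ell_restrict)
  have [measurable]: "U (v @ w) \<in> borel_measurable M" "(\<lambda>\<omega>. ell (\<lambda>z. U z \<omega>) v w) \<in> borel_measurable M"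
    using v w by (simp_all add: measurable_U labels.borel_measurable_ell)
  have fint: "integrable M (\<lambda>\<omega>. (fi (restrict (\<lambda>j. U j \<omega>) A (v @ w)))\<^sup>2)"
    unfolding rA
  proof (rule integrable_const_bound[where B = 1])
    show "AE \<omega> in M. norm ((fi (U (v @ w) \<omega>))\<^sup>2) \<le> 1"
      using AE_U_in_unit
    proof eventually_elim
      case (elim \<omega>)
      then have "U (v @ w) \<omega> \<in> {0..1}"
        using v w by simp
      then show ?case
        by (auto simp: fi_def power_le_one abs_square_le_1)
    qed
  qed (simp add: fi_def)
  have gint: "integrable M (\<lambda>\<omega>. (ell (restrict (\<lambda>j. U j \<omega>) B) v w)\<^sup>2)"
    unfolding rB
  proof (rule integrable_const_bound[where B = 1])
    show "AE \<omega> in M. norm ((ell (\<lambda>z. U z \<omega>) v w)\<^sup>2) \<le> 1"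
      using AE_ell_in_unit[OF v w] by eventually_elim (simp add: abs_square_le_1)
  qed simp
  have "(\<integral>\<omega>. (ell (\<lambda>z. U z \<omega>) v (w @ [i]))\<^sup>2 \<partial>M)
      = (\<integral>\<omega>. (fi (restrict (\<lambda>j. U j \<omega>) A (v @ w)))\<^sup>2 * (ell (restrict (\<lambda>j. U j \<omega>) B) v w)\<^sup>2 \<partial>M)"
    unfolding rA rB by (simp add: ell_snoc fi_def power_mult_distrib mult.commute)
  also have "\<dots> = (\<integral>\<omega>. (fi (restrict (\<lambda>j. U j \<omega>) A (v @ w)))\<^sup>2 \<partial>M) * (\<integral>\<omega>. (ell (restrict (\<lambda>j. U j \<omega>) B) v w)\<^sup>2 \<partial>M)"
    by (rule integral_blocks_mult[OF AB f g fint gint])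
  also have "(\<integral>\<omega>. (fi (restrict (\<lambda>j. U j \<omega>) A (v @ w)))\<^sup>2 \<partial>M) = 1/3"
  proof -
    have "(\<integral>\<omega>. (fi (U (v @ w) \<omega>))\<^sup>2 \<partial>M) = integral\<^sup>L unif01 (\<lambda>x. (fi x)\<^sup>2)"
      using v w by (intro integral_U) (auto simp: fi_def)
    also have "\<dots> = 1/3"
      by (cases "i = 1") (simp_all add: fi_def integral_unif01_power2 integral_unif01_power2_one_minus)
    finally show ?thesis
      unfolding rA .
  qed
  also have "(\<integral>\<omega>. (ell (restrict (\<lambda>j. U j \<omega>) B) v w)\<^sup>2 \<partial>M) = (1/3) ^ length w"
    unfolding rB by (rule snoc.IH[OF w])
  finally show ?case
    by simp
qed (simp add: prob_space)

definition Qterm :: "nat list \<Rightarrow> nat list \<Rightarrow> 'a \<Rightarrow> real" where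
  "Qterm v w \<omega> = ell (\<lambda>z. U z \<omega>) v w * costC (U (v @ w) \<omega>)"

lemma borel_measurable_Qterm [measurable]: "v \<in> Vset \<Longrightarrow> w \<in> Vset \<Longrightarrow> Qterm v w \<in> borel_measurable M"
proof -
  assume "v \<in> Vset" "w \<in> Vset"
  then have [measurable]: "U (v @ w) \<in> borel_measurable M" "(\<lambda>\<omega>. ell (\<lambda>z. U z \<omega>) v w) \<in> borel_measurable M"
    by (simp_all add: measurable_U labels.borel_measurable_ell)
  show ?thesis
    unfolding Qterm_def[abs_def] by measurable
qed

lemma borel_measurable_sum_Qterm:
  "v \<in> Vset \<Longrightarrow> W \<subseteq> Vset \<Longrightarrow> (\<lambda>\<omega>. \<Sum>w\<in>W. Qterm v w \<omega>) \<in> borel_measurable M"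
  by (intro borel_measurable_sum borel_measurable_Qterm) auto

lemma AE_abs_Qterm_le: "v \<in> Vset \<Longrightarrow> w \<in> Vset \<Longrightarrow> AE \<omega> in M. \<bar>Qterm v w \<omega>\<bar> \<le> 3"
proof -
  assume v: "v \<in> Vset" and w: "w \<in> Vset"
  then have "v @ w \<in> Vset"
    by simp
  show ?thesis
    using AE_ell_in_unit[OF v w] AE_abs_costC_U_le[OF \<open>v @ w \<in> Vset\<close>]
  proof eventually_elim
    case (elim \<omega>)
    then have "\<bar>ell (\<lambda>z. U z \<omega>) v w\<bar> * \<bar>costC (U (v @ w) \<omega>)\<bar> \<le> 1 * 3"
      by (intro mult_mono) auto
    then show ?case
      by (simp add: Qterm_def abs_mult)
  qed
qed

lemma integrable_Qterm_mult:
  assumes "v \<in> Vset" "w \<in> Vset" "w' \<in> Vset"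
  shows "integrable M (\<lambda>\<omega>. Qterm v w \<omega> * Qterm v w' \<omega>)"
proof (rule integrable_const_bound[where B = 9])
  show "AE \<omega> in M. norm (Qterm v w \<omega> * Qterm v w' \<omega>) \<le> 9"
    using AE_abs_Qterm_le[OF assms(1,2)] AE_abs_Qterm_le[OF assms(1,3)]
  proof eventually_elim
    case (elim \<omega>)
    then have "\<bar>Qterm v w \<omega>\<bar> * \<bar>Qterm v w' \<omega>\<bar> \<le> 3 * 3"
      by (intro mult_mono) auto
    then show ?case
      by (simp add: abs_mult)
  qed
qed (use assms in simp)

lemma integrable_sum_Qterm_sq:
  "v \<in> Vset \<Longrightarrow> W \<subseteq> Vset \<Longrightarrow> integrable M (\<lambda>\<omega>. (\<Sum>w\<in>W. Qterm v w \<omega>)\<^sup>2)"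
  by (simp add: power2_eq_square sum_product integrable_sum integrable_Qterm_mult subsetD)

text \<open>Orthogonality: the cost at the deeper node \<open>v @ w\<close> is independent of everything the other
  factors depend on, and has mean zero.\<close>

lemma integral_Qterm_mult_eq_0:
  assumes v: "v \<in> Vset" and w: "w \<in> Vset" and w': "w' \<in> Vset"
    and "w \<noteq> w'" and "length w' \<le> length w"
  shows "(\<integral>\<omega>. Qterm v w \<omega> * Qterm v w' \<omega> \<partial>M) = 0"
proof -
  define A where "A = {v @ w}"
  define B where "B = path_above v w \<union> path_above v w' \<union> {v @ w'}"
  have AB: "A \<inter> B = {}" "A \<subseteq> Vset" "B \<subseteq> Vset"
    using assms not_in_path_above[of w w v] not_in_path_above[of w' w v]
      path_above_subset_Vset[OF v w] path_above_subset_Vset[OF v w'] by (auto simp: A_def B_def)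
  define g where "g r = ell r v w * ell r v w' * costC (r (v @ w'))" for r
  have f: "(\<lambda>r. costC (r (v @ w))) \<in> borel_measurable (PiM A (\<lambda>_. borel))"
    unfolding A_def by measurable
  have [measurable]: "(\<lambda>r. ell r v w) \<in> borel_measurable (PiM B (\<lambda>_. borel))"
    "(\<lambda>r. ell r v w') \<in> borel_measurable (PiM B (\<lambda>_. borel))"
    "(\<lambda>r. r (v @ w')) \<in> borel_measurable (PiM B (\<lambda>_. borel))"
    using v w w' by (auto intro!: borel_measurable_ell_PiM measurable_component_singleton simp: B_def)
  have g: "g \<in> borel_measurable (PiM B (\<lambda>_. borel))"
    unfolding g_def[abs_def] by measurable
  have rA: "restrict (\<lambda>j. U j \<omega>) A (v @ w) = U (v @ w) \<omega>" for \<omega>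
    by (simp add: A_def)
  have rB: "g (restrict (\<lambda>j. U j \<omega>) B) = ell (\<lambda>z. U z \<omega>) v w * Qterm v w' \<omega>" for \<omega>
  proof -
    have "ell (restrict (\<lambda>j. U j \<omega>) B) v w = ell (\<lambda>z. U z \<omega>) v w"
      "ell (restrict (\<lambda>j. U j \<omega>) B) v w' = ell (\<lambda>z. U z \<omega>) v w'"
      by (rule ell_restrict, auto simp: B_def)+
    then show ?thesis
      by (simp add: g_def Qterm_def B_def)
  qed
  have [measurable]: "U (v @ w) \<in> borel_measurable M" "(\<lambda>\<omega>. ell (\<lambda>z. U z \<omega>) v w) \<in> borel_measurable M"
    using v w by (simp_all add: measurable_U labels.borel_measurable_ell)
  have vw: "v @ w \<in> Vset"
    using v w by simp
  have fint: "integrable M (\<lambda>\<omega>. costC (restrict (\<lambda>j. U j \<omega>) A (v @ w)))"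
    unfolding rA by (rule integrable_const_bound[where B = 3]) (use AE_abs_costC_U_le[OF vw] in auto)
  have gint: "integrable M (\<lambda>\<omega>. g (restrict (\<lambda>j. U j \<omega>) B))"
    unfolding rB
  proof (rule integrable_const_bound[where B = 3])
    show "AE \<omega> in M. norm (ell (\<lambda>z. U z \<omega>) v w * Qterm v w' \<omega>) \<le> 3"
      using AE_ell_in_unit[OF v w] AE_abs_Qterm_le[OF v w']
    proof eventually_elim
      case (elim \<omega>)
      then have "\<bar>ell (\<lambda>z. U z \<omega>) v w\<bar> * \<bar>Qterm v w' \<omega>\<bar> \<le> 1 * 3"
        by (intro mult_mono) auto
      then show ?case
        by (simp add: abs_mult)
    qed
  qed (use v w' in simp)
  have "(\<integral>\<omega>. Qterm v w \<omega> * Qterm v w' \<omega> \<partial>M)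
      = (\<integral>\<omega>. costC (restrict (\<lambda>j. U j \<omega>) A (v @ w)) * g (restrict (\<lambda>j. U j \<omega>) B) \<partial>M)"
    unfolding rA rB by (simp add: Qterm_def ac_simps)
  also have "\<dots> = (\<integral>\<omega>. costC (restrict (\<lambda>j. U j \<omega>) A (v @ w)) \<partial>M) * (\<integral>\<omega>. g (restrict (\<lambda>j. U j \<omega>) B) \<partial>M)"
    by (rule integral_blocks_mult[OF AB f g fint gint])
  also have "(\<integral>\<omega>. costC (restrict (\<lambda>j. U j \<omega>) A (v @ w)) \<partial>M) = 0"
    unfolding rA using v w by (simp add: integral_U integral_unif01_costC)
  finally show ?thesis
    by simp
qed

lemma integral_Qterm_sq_le:
  assumes v: "v \<in> Vset" and w: "w \<in> Vset"
  shows "(\<integral>\<omega>. Qterm v w \<omega> * Qterm v w \<omega> \<partial>M) \<le> 9 * (1/3) ^ length w"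
proof -
  have [measurable]: "(\<lambda>\<omega>. ell (\<lambda>z. U z \<omega>) v w) \<in> borel_measurable M"
    using v w by (rule labels.borel_measurable_ell)
  have vw: "v @ w \<in> Vset"
    using v w by simp
  have "integrable M (\<lambda>\<omega>. 9 * (ell (\<lambda>z. U z \<omega>) v w)\<^sup>2)"
  proof (rule integrable_const_bound[where B = 9])
    show "AE \<omega> in M. norm (9 * (ell (\<lambda>z. U z \<omega>) v w)\<^sup>2) \<le> 9"
      using AE_ell_in_unit[OF v w] by eventually_elim (simp add: abs_square_le_1)
  qed measurable
  then have "(\<integral>\<omega>. Qterm v w \<omega> * Qterm v w \<omega> \<partial>M) \<le> (\<integral>\<omega>. 9 * (ell (\<lambda>z. U z \<omega>) v w)\<^sup>2 \<partial>M)"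
  proof (rule integral_mono_AE[OF integrable_Qterm_mult[OF v w w]])
    show "AE \<omega> in M. Qterm v w \<omega> * Qterm v w \<omega> \<le> 9 * (ell (\<lambda>z. U z \<omega>) v w)\<^sup>2"
      using AE_abs_costC_U_le[OF vw]
    proof eventually_elim
      case (elim \<omega>)
      then have "\<bar>costC (U (v @ w) \<omega>)\<bar> \<le> \<bar>3\<bar>"
        by simp
      then have "(costC (U (v @ w) \<omega>))\<^sup>2 \<le> 3\<^sup>2"
        by (simp only: abs_le_square_iff)
      then have "(ell (\<lambda>z. U z \<omega>) v w)\<^sup>2 * (costC (U (v @ w) \<omega>))\<^sup>2 \<le> (ell (\<lambda>z. U z \<omega>) v w)\<^sup>2 * 9"
        by (intro mult_left_mono) auto
      then show ?case
        by (simp add: Qterm_def power2_eq_square ac_simps)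
    qed
  qed
  also have "\<dots> = 9 * (1/3) ^ length w"
    using integral_ell_sq[OF v w] by simp
  finally show ?thesis .
qed

lemma integral_sum_Qterm_sq_le:
  assumes v: "v \<in> Vset" and W: "finite W" "W \<subseteq> Vset"
  shows "(\<integral>\<omega>. (\<Sum>w\<in>W. Qterm v w \<omega>)\<^sup>2 \<partial>M) \<le> 9 * (\<Sum>w\<in>W. (1/3) ^ length w)"
proof -
  have cross: "(\<integral>\<omega>. Qterm v w \<omega> * Qterm v w' \<omega> \<partial>M) = 0" if "w \<in> W" "w' \<in> W" "w \<noteq> w'" for w w'
  proof (cases "length w' \<le> length w")
    case True
    with that W v show ?thesis
      by (intro integral_Qterm_mult_eq_0) auto
  next
    case False
    with that W v have "(\<integral>\<omega>. Qterm v w' \<omega> * Qterm v w \<omega> \<partial>M) = 0"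
      by (intro integral_Qterm_mult_eq_0) auto
    then show ?thesis
      by (simp add: mult.commute)
  qed
  have "(\<integral>\<omega>. (\<Sum>w\<in>W. Qterm v w \<omega>)\<^sup>2 \<partial>M) = (\<Sum>w\<in>W. \<Sum>w'\<in>W. (\<integral>\<omega>. Qterm v w \<omega> * Qterm v w' \<omega> \<partial>M))"
    using W v by (simp add: power2_eq_square sum_product integrable_sum integrable_Qterm_mult subsetD)
  also have "\<dots> = (\<Sum>w\<in>W. (\<integral>\<omega>. Qterm v w \<omega> * Qterm v w \<omega> \<partial>M))"
  proof (rule sum.cong[OF refl])
    fix w
    assume "w \<in> W"
    have "(\<Sum>w'\<in>W. (\<integral>\<omega>. Qterm v w \<omega> * Qterm v w' \<omega> \<partial>M))
        = (\<Sum>w'\<in>W. if w' = w then (\<integral>\<omega>. Qterm v w \<omega> * Qterm v w \<omega> \<partial>M) else 0)"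
      using \<open>w \<in> W\<close> by (intro sum.cong refl) (auto simp: cross)
    then show "(\<Sum>w'\<in>W. (\<integral>\<omega>. Qterm v w \<omega> * Qterm v w' \<omega> \<partial>M)) = (\<integral>\<omega>. Qterm v w \<omega> * Qterm v w \<omega> \<partial>M)"
      using W(1) \<open>w \<in> W\<close> by simp
  qed
  also have "\<dots> \<le> (\<Sum>w\<in>W. 9 * (1/3) ^ length w)"
    using W v by (intro sum_mono integral_Qterm_sq_le) auto
  finally show ?thesis
    by (simp add: sum_distrib_left)
qed

lemma nn_integral_abs_sum_Qterm_Vlen_le:
  assumes v: "v \<in> Vset"
  shows "(\<integral>\<^sup>+\<omega>. ennreal \<bar>\<Sum>w\<in>Vlen k. Qterm v w \<omega>\<bar> \<partial>M) \<le> ennreal (3 * sqrt (2/3) ^ k)"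
proof (rule nn_integral_le_of_sq_le)
  define D where "D \<omega> = (\<Sum>w\<in>Vlen k. Qterm v w \<omega>)" for \<omega>
  have [measurable]: "D \<in> borel_measurable M"
    unfolding D_def[abs_def] using v Vlen_subset_Vset by (rule borel_measurable_sum_Qterm)
  have "integrable M (\<lambda>\<omega>. (D \<omega>)\<^sup>2)"
    unfolding D_def using v Vlen_subset_Vset by (rule integrable_sum_Qterm_sq)
  then have "(\<integral>\<^sup>+\<omega>. ennreal ((D \<omega>)\<^sup>2) \<partial>M) = ennreal (\<integral>\<omega>. (D \<omega>)\<^sup>2 \<partial>M)"
    by (rule nn_integral_eq_integral) simp
  then have "(\<integral>\<^sup>+\<omega>. ennreal \<bar>D \<omega>\<bar> ^ 2 \<partial>M) = ennreal (\<integral>\<omega>. (D \<omega>)\<^sup>2 \<partial>M)"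
    by (simp add: ennreal_power)
  also have "\<dots> \<le> ennreal (9 * (2/3) ^ k)"
    using integral_sum_Qterm_sq_le[OF v finite_Vlen Vlen_subset_Vset, of k]
    by (simp add: D_def sum_Vlen_third_power)
  also have "9 * (2/3) ^ k = (3 * sqrt (2/3::real) ^ k)\<^sup>2"
    by (simp add: power_mult_distrib real_sqrt_power[symmetric])
  finally show "(\<integral>\<^sup>+\<omega>. ennreal \<bar>\<Sum>w\<in>Vlen k. Qterm v w \<omega>\<bar> ^ 2 \<partial>M) \<le> ennreal ((3 * sqrt (2/3) ^ k)\<^sup>2)"
    by (simp add: D_def)
  show "(\<lambda>\<omega>. ennreal \<bar>\<Sum>w\<in>Vlen k. Qterm v w \<omega>\<bar>) \<in> borel_measurable M"
    using borel_measurable_sum_Qterm[OF v Vlen_subset_Vset] by measurable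
qed (simp_all add: prob_space_axioms)

text \<open>The level sums are summable in \<open>L\<^sub>1\<close>, so the series defining \<open>Q\<^sup>v\<close> converges absolutely a.s.\<close>

lemma AE_Qterm_partial_sums_tendsto_Qlim:
  assumes v: "v \<in> Vset"
  shows "AE \<omega> in M. (\<lambda>m. \<Sum>w\<in>Vlt m. Qterm v w \<omega>) \<longlonglongrightarrow> Qlim (\<lambda>z. U z \<omega>) v"
proof -
  define D where "D k \<omega> = (\<Sum>w\<in>Vlen k. Qterm v w \<omega>)" for k \<omega>
  have [measurable]: "D k \<in> borel_measurable M" for k
    unfolding D_def[abs_def] using v Vlen_subset_Vset by (rule borel_measurable_sum_Qterm)
  have "summable (\<lambda>k. 3 * sqrt (2/3::real) ^ k)"
    by (intro summable_mult summable_geometric) auto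
  have "(\<integral>\<^sup>+\<omega>. (\<Sum>k. ennreal \<bar>D k \<omega>\<bar>) \<partial>M) = (\<Sum>k. \<integral>\<^sup>+\<omega>. ennreal \<bar>D k \<omega>\<bar> \<partial>M)"
    by (rule nn_integral_suminf) measurable
  also have "\<dots> \<le> (\<Sum>k. ennreal (3 * sqrt (2/3) ^ k))"
    by (intro suminf_le) (simp_all add: D_def nn_integral_abs_sum_Qterm_Vlen_le[OF v])
  also have "\<dots> = ennreal (\<Sum>k. 3 * sqrt (2/3) ^ k)"
    using \<open>summable _\<close> by (intro suminf_ennreal2) auto
  finally have "(\<integral>\<^sup>+\<omega>. (\<Sum>k. ennreal \<bar>D k \<omega>\<bar>) \<partial>M) \<noteq> \<infinity>"
    by (auto simp: top_unique)
  then have "AE \<omega> in M. (\<Sum>k. ennreal \<bar>D k \<omega>\<bar>) \<noteq> \<infinity>"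
    by (intro nn_integral_noteq_infinite) measurable
  then show ?thesis
  proof eventually_elim
    case (elim \<omega>)
    then have "summable (\<lambda>k. \<bar>D k \<omega>\<bar>)"
      by (intro summable_suminf_not_top) auto
    then have "(\<lambda>m. \<Sum>k<m. D k \<omega>) \<longlonglongrightarrow> (\<Sum>k. D k \<omega>)"
      by (intro summable_LIMSEQ) (rule summable_rabs_cancel)
    moreover have "(\<lambda>m. \<Sum>k<m. D k \<omega>) = (\<lambda>m. \<Sum>w\<in>Vlt m. Qterm v w \<omega>)"
      unfolding D_def sum_Vlt_eq_sum_Vlen ..
    ultimately have lim: "(\<lambda>m. \<Sum>w\<in>Vlt m. Qterm v w \<omega>) \<longlonglongrightarrow> (\<Sum>k. D k \<omega>)"
      by simp
    have "Qlim (\<lambda>z. U z \<omega>) v = lim (\<lambda>m. \<Sum>w\<in>Vlt m. Qterm v w \<omega>)"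
      unfolding Qlim_def Qterm_def ..
    also have "\<dots> = (\<Sum>k. D k \<omega>)"
      using lim by (rule limI)
    finally show ?case
      using lim by simp
  qed
qed

lemma nn_integral_Qlim_sq_le:
  assumes v: "v \<in> Vset"
  shows "(\<integral>\<^sup>+\<omega>. ennreal ((Qlim (\<lambda>z. U z \<omega>) v)\<^sup>2) \<partial>M) \<le> 27"
proof -
  define Q where "Q m \<omega> = (\<Sum>w\<in>Vlt m. Qterm v w \<omega>)" for m \<omega>
  have [measurable]: "Q m \<in> borel_measurable M" for m
    unfolding Q_def[abs_def] using v Vlt_subset_Vset by (rule borel_measurable_sum_Qterm)
  have "(\<integral>\<^sup>+\<omega>. ennreal ((Qlim (\<lambda>z. U z \<omega>) v)\<^sup>2) \<partial>M) = (\<integral>\<^sup>+\<omega>. liminf (\<lambda>m. ennreal ((Q m \<omega>)\<^sup>2)) \<partial>M)"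
  proof (rule nn_integral_cong_AE)
    show "AE \<omega> in M. ennreal ((Qlim (\<lambda>z. U z \<omega>) v)\<^sup>2) = liminf (\<lambda>m. ennreal ((Q m \<omega>)\<^sup>2))"
      using AE_Qterm_partial_sums_tendsto_Qlim[OF v]
    proof eventually_elim
      case (elim \<omega>)
      then have "(\<lambda>m. Q m \<omega>) \<longlonglongrightarrow> Qlim (\<lambda>z. U z \<omega>) v"
        by (simp add: Q_def)
      then have "(\<lambda>m. ennreal ((Q m \<omega>)\<^sup>2)) \<longlonglongrightarrow> ennreal ((Qlim (\<lambda>z. U z \<omega>) v)\<^sup>2)"
        by (intro tendsto_ennrealI tendsto_power)
      then show ?case
        by (subst lim_imp_Liminf) auto
    qed
  qed
  also have "\<dots> \<le> liminf (\<lambda>m. \<integral>\<^sup>+\<omega>. ennreal ((Q m \<omega>)\<^sup>2) \<partial>M)"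
    by (rule nn_integral_liminf) measurable
  also have "\<dots> \<le> limsup (\<lambda>m. \<integral>\<^sup>+\<omega>. ennreal ((Q m \<omega>)\<^sup>2) \<partial>M)"
    by (rule Liminf_le_Limsup) simp
  also have "\<dots> \<le> 27"
  proof (rule Limsup_bounded, rule always_eventually, rule allI)
    fix m
    have "integrable M (\<lambda>\<omega>. (Q m \<omega>)\<^sup>2)"
      unfolding Q_def using v Vlt_subset_Vset by (rule integrable_sum_Qterm_sq)
    then have "(\<integral>\<^sup>+\<omega>. ennreal ((Q m \<omega>)\<^sup>2) \<partial>M) = ennreal (\<integral>\<omega>. (Q m \<omega>)\<^sup>2 \<partial>M)"
      by (simp add: nn_integral_eq_integral)
    moreover have "(\<integral>\<omega>. (Q m \<omega>)\<^sup>2 \<partial>M) \<le> 27"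
      unfolding Q_def using integral_sum_Qterm_sq_le[OF v finite_Vlt Vlt_subset_Vset, of m] sum_Vlt_third_power_le[of m]
      by linarith
    ultimately show "(\<integral>\<^sup>+\<omega>. ennreal ((Q m \<omega>)\<^sup>2) \<partial>M) \<le> 27"
      by (simp add: ennreal_leI[of _ 27, simplified])
  qed
  finally show ?thesis .
qed

end

context iid_uniform_tree
begin

lemma sq_moment_0_finite: "sq_moment 0 < \<infinity>"
proof -
  have [measurable]: "(\<lambda>\<omega>. Qlim (\<lambda>v. U v \<omega>) [Suc 0]) \<in> borel_measurable M"
    by (rule labels.borel_measurable_Qlim) simp
  have "sq_moment 0 \<le> (\<integral>\<^sup>+\<omega>. ennreal 98 + 2 * ennreal ((Qlim (\<lambda>v. U v \<omega>) [1])\<^sup>2) \<partial>M)"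
    unfolding sq_moment_def Ssum_0
  proof (rule nn_integral_mono_AE)
    show "AE \<omega> in M. supnorm (Cfun (\<lambda>v. U v \<omega>) []) ^ 2 \<le> ennreal 98 + 2 * ennreal ((Qlim (\<lambda>v. U v \<omega>) [1])\<^sup>2)"
      using AE_U_in_unit
    proof eventually_elim
      case (elim \<omega>)
      define q where "q = Qlim (\<lambda>v. U v \<omega>) [1]"
      have "supnorm (Cfun (\<lambda>v. U v \<omega>) []) \<le> ennreal (7 + \<bar>q\<bar>)"
        unfolding q_def using elim supnorm_Cfun_le[of "\<lambda>v. U v \<omega>" "[]"] by simp
      then have "supnorm (Cfun (\<lambda>v. U v \<omega>) []) ^ 2 \<le> ennreal (7 + \<bar>q\<bar>) ^ 2"
        by (rule power_mono) simp
      also have "\<dots> = ennreal ((7 + \<bar>q\<bar>)\<^sup>2)"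
        by (rule ennreal_power) simp
      also have "\<dots> \<le> ennreal (98 + 2 * q\<^sup>2)"
        using sum_squares_ge_zero[of "\<bar>q\<bar> - 7" 0] by (intro ennreal_leI) (simp add: power2_eq_square algebra_simps)
      also have "\<dots> = ennreal 98 + 2 * ennreal (q\<^sup>2)"
        by (simp add: ennreal_plus ennreal_mult)
      finally show ?case
        by (simp add: q_def)
    qed
  qed
  also have "\<dots> = ennreal 98 + 2 * (\<integral>\<^sup>+\<omega>. ennreal ((Qlim (\<lambda>v. U v \<omega>) [1])\<^sup>2) \<partial>M)"
    by (subst nn_integral_add) (auto simp: nn_integral_cmult emeasure_space_1)
  also have "\<dots> \<le> ennreal 98 + 2 * 27"
    using nn_integral_Qlim_sq_le[of "[1]"] by (intro add_mono mult_left_mono) auto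
  also have "\<dots> < \<infinity>"
    by (simp del: ennreal_numeral add: ennreal_numeral[symmetric] ennreal_mult[symmetric])
  finally show ?thesis .
qed

lemma sq_moment_le_geometric: "sq_moment m \<le> ennreal ((2/3) ^ m) * sq_moment 0"
proof (induction m)
  case (Suc m)
  have "sq_moment (Suc m) \<le> ennreal (2/3) * sq_moment m"
    by (rule sq_moment_Suc_le)
  also have "\<dots> \<le> ennreal (2/3) * (ennreal ((2/3) ^ m) * sq_moment 0)"
    by (intro mult_left_mono Suc) simp
  also have "\<dots> = ennreal ((2/3) ^ Suc m) * sq_moment 0"
    by (simp add: ennreal_mult[symmetric] mult.assoc[symmetric])
  finally show ?case .
qed simp

text \<open>By Cauchy-Schwarz \<open>E \<parallel>S\<^sub>m\<parallel>\<^sub>\<infinity> \<le> b\<^sub>m\<close>, and the \<open>b\<^sub>m\<close> decay geometrically.\<close>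

lemma AE_summable_supnorm_Ssum: "AE \<omega> in M. (\<Sum>m. supnorm (Ssum (\<lambda>v. U v \<omega>) [] m)) < \<infinity>"
proof -
  define B0 where "B0 = enn2real (sq_moment 0)"
  have B0: "sq_moment 0 = ennreal B0" "0 \<le> B0"
    using sq_moment_0_finite by (auto simp: B0_def less_top ennreal_enn2real)
  define c where "c m = sqrt (2/3) ^ m * (sqrt B0 + 1)" for m :: nat
  have c_pos: "c m > 0" for m
    using B0(2) by (simp add: c_def add_nonneg_pos)
  have [measurable]: "(\<lambda>\<omega>. supnorm (Ssum (\<lambda>v. U v \<omega>) [] m)) \<in> borel_measurable M" for m
    by (rule labels.borel_measurable_supnorm_Ssum) simp
  have expectation_le: "(\<integral>\<^sup>+\<omega>. supnorm (Ssum (\<lambda>v. U v \<omega>) [] m) \<partial>M) \<le> ennreal (c m)" for m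
  proof (rule nn_integral_le_of_sq_le[OF prob_space_axioms _ c_pos])
    have "(\<integral>\<^sup>+\<omega>. supnorm (Ssum (\<lambda>v. U v \<omega>) [] m) ^ 2 \<partial>M) \<le> ennreal ((2/3) ^ m * B0)"
      using sq_moment_le_geometric[of m] B0 by (simp add: sq_moment_def ennreal_mult)
    also have "(2/3) ^ m * B0 \<le> (c m)\<^sup>2"
    proof -
      have "B0 \<le> (sqrt B0 + 1)\<^sup>2"
        using B0(2) by (simp add: power2_eq_square algebra_simps)
      then have "(2/3) ^ m * B0 \<le> (2/3) ^ m * (sqrt B0 + 1)\<^sup>2"
        by (intro mult_left_mono) auto
      also have "\<dots> = (c m)\<^sup>2"
      proof -
        have "(sqrt (2/3::real) ^ m)\<^sup>2 = (sqrt (2/3) ^ 2) ^ m"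
          by (simp only: power_mult[symmetric] mult.commute)
        then show ?thesis
          by (simp add: c_def power_mult_distrib)
      qed
      finally show ?thesis .
    qed
    finally show "(\<integral>\<^sup>+\<omega>. supnorm (Ssum (\<lambda>v. U v \<omega>) [] m) ^ 2 \<partial>M) \<le> ennreal ((c m)\<^sup>2)"
      by (simp add: ennreal_leI)
  qed measurable
  have "summable c"
    unfolding c_def by (intro summable_mult2 summable_geometric) auto
  have "(\<integral>\<^sup>+\<omega>. (\<Sum>m. supnorm (Ssum (\<lambda>v. U v \<omega>) [] m)) \<partial>M) = (\<Sum>m. \<integral>\<^sup>+\<omega>. supnorm (Ssum (\<lambda>v. U v \<omega>) [] m) \<partial>M)"
    by (rule nn_integral_suminf) measurable
  also have "\<dots> \<le> (\<Sum>m. ennreal (c m))"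
    by (intro suminf_le expectation_le) auto
  also have "\<dots> = ennreal (\<Sum>m. c m)"
    using \<open>summable c\<close> c_pos by (intro suminf_ennreal2) (auto simp: less_imp_le)
  finally have "(\<integral>\<^sup>+\<omega>. (\<Sum>m. supnorm (Ssum (\<lambda>v. U v \<omega>) [] m)) \<partial>M) \<noteq> \<infinity>"
    by (auto simp: top_unique)
  then have "AE \<omega> in M. (\<Sum>m. supnorm (Ssum (\<lambda>v. U v \<omega>) [] m)) \<noteq> \<infinity>"
    by (intro nn_integral_noteq_infinite) measurable
  then show ?thesis
    by (simp add: less_top)
qed

end

theorem mainTheorem4:
  fixes M :: "'a measure" and U :: "nat list \<Rightarrow> 'a \<Rightarrow> real"
  assumes "prob_space M"
    and "\<And>v. v \<in> Vset \<Longrightarrow> U v \<in> borel_measurable M"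
    and "prob_space.indep_vars M (\<lambda>_. borel) U Vset"
    and "\<And>v. v \<in> Vset \<Longrightarrow> distr M borel (U v) = uniform_measure lborel {0..1}"
    and bsq_def: "\<And>m. bsq m = \<integral>\<^sup>+ \<omega>. (supnorm (Ssum (\<lambda>v. U v \<omega>) [] m)) ^ 2 \<partial>M"
    and b_def: "\<And>m. b m = sqrt (enn2real (bsq m))"
  shows "(\<forall>m\<ge>1. bsq m \<le> ennreal (2/3) * bsq (m - 1))
    \<and> (\<forall>m. b m \<le> (2/3) powr (real m / 2) * b 0)
    \<and> b 0 = sqrt (enn2real (\<integral>\<^sup>+ \<omega>. (supnorm (Cfun (\<lambda>v. U v \<omega>) [])) ^ 2 \<partial>M))
    \<and> bsq 0 < \<infinity>
    \<and> (AE \<omega> in M. (\<Sum>m. supnorm (Ssum (\<lambda>v. U v \<omega>) [] m)) < \<infinity>)"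
proof -
  interpret iid_uniform_tree M U
    using assms(1-4) by (simp add: iid_uniform_tree_def iid_uniform_tree_axioms_def)
  have bsq: "bsq = sq_moment"
    by (simp add: fun_eq_iff bsq_def sq_moment_def)
  have "b m \<le> (2/3) powr (real m / 2) * b 0" for m
  proof -
    have "enn2real (bsq m) \<le> (2/3) ^ m * enn2real (bsq 0)"
      using enn2real_mono[OF sq_moment_le_geometric[of m]] sq_moment_0_finite
      by (simp add: bsq enn2real_mult ennreal_mult_less_top)
    then have "b m \<le> sqrt ((2/3) ^ m) * b 0"
      by (simp add: b_def real_sqrt_mult[symmetric])
    then show ?thesis
      by (simp add: powr_half_sqrt_powr powr_realpow)
  qed
  then show ?thesis
    using sq_moment_Suc_le sq_moment_0_finite AE_summable_supnorm_Ssum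
    by (auto simp: bsq b_def Ssum_0 sq_moment_def dest!: Suc_le_D)
qed

end
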